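(* Let $\mathcal K$ be a Fraïssé class in a language $L$. If $\mathcal K$ is Ramsey, then there exists a reasonable, forgetful ordered Fraïssé class $\mathcal K^*$ in the language $L\cup\{<\}$ whose $L$-reduct is $\mathcal K$.
   Context: For structures $A,B$, $B^A$ is the set of embeddings of $A$ into $B$ and $\binom{B}{A}$ the set of substructures of $B$ isomorphic to $A$. A Fraïssé class is a class of finite structures that is hereditary, has joint embedding and amalgamation, and contains arbitrarily large finite structures. $\mathcal K$ is Ramsey if for all $A,B\in\mathcal K$ and $k\ge2$ there is $C\in\mathcal K$ such that every $\chi:\binom{C}{A}\to\{0,\dots,k-1\}$ is constant on $\binom{B'}{A}$ for some $B'\in\binom{C}{B}$. An ordered class $\mathcal K^*$ of finite $L\cup\{<\}$-structures is one whose members have the form $(A,<^A)$ with $<^A$ a linear order on the $L$-structure $A$; such $<^A$ is $\mathcal K^*$-admissible, and $\{A:(A,<^A)\in\mathcal K^*\}$ is the $L$-reduct of $\mathcal K^*$. With $\mathcal K$ the $L$-reduct of $\mathcal K^*$: $\mathcal K^*$ is reasonable if for all $A,B\in\mathcal K$, $a\in B^A$ and $\mathcal K^*$-admissible $<^A$ on $A$ there is a $\mathcal K^*$-admissible $<^B$ on $B$ such that $a$ is an embedding $(A,<^A)\to(B,<^B)$; $\mathcal K^*$ is forgetful if for all $A,B\in\mathcal K$ with $A\cong B$ and all $\mathcal K^*$-admissible orders $<^A,<^B$ on $A,B$, we have $(A,<^A)\cong(B,<^B)$. *)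

theory Defs
  imports Main
begin

text \<open>Finite structures are taken with
universe a subset of nat (classes of finite structures are considered up to
isomorphism, so this loses nothing).\<close>

record ('r, 'f) struc =
  scarrier :: "nat set"
  srels :: "'r \<Rightarrow> nat list \<Rightarrow> bool"
  sfuns :: "'f \<Rightarrow> nat list \<Rightarrow> nat"

definition wf_struc :: "('r \<Rightarrow> nat) \<Rightarrow> ('f \<Rightarrow> nat) \<Rightarrow> ('r, 'f) struc \<Rightarrow> bool" where
  "wf_struc aR aF A \<longleftrightarrow>
     (\<forall>f xs. length xs = aF f \<and> set xs \<subseteq> scarrier A \<longrightarrow> sfuns A f xs \<in> scarrier A) \<and>
     (\<forall>R xs. srels A R xs \<longrightarrow> length xs = aR R \<and> set xs \<subseteq> scarrier A)"

definition embedding :: "('f \<Rightarrow> nat) \<Rightarrow> (nat \<Rightarrow> nat) \<Rightarrow> ('r, 'f) struc \<Rightarrow> ('r, 'f) struc \<Rightarrow> bool" where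
  "embedding aF h A B \<longleftrightarrow>
     inj_on h (scarrier A) \<and> h ` scarrier A \<subseteq> scarrier B \<and>
     (\<forall>R xs. set xs \<subseteq> scarrier A \<longrightarrow> (srels B R (map h xs) \<longleftrightarrow> srels A R xs)) \<and>
     (\<forall>f xs. length xs = aF f \<and> set xs \<subseteq> scarrier A \<longrightarrow> h (sfuns A f xs) = sfuns B f (map h xs))"

definition isomorphism :: "('f \<Rightarrow> nat) \<Rightarrow> (nat \<Rightarrow> nat) \<Rightarrow> ('r, 'f) struc \<Rightarrow> ('r, 'f) struc \<Rightarrow> bool" where
  "isomorphism aF h A B \<longleftrightarrow> embedding aF h A B \<and> h ` scarrier A = scarrier B"

definition isomorphic :: "('f \<Rightarrow> nat) \<Rightarrow> ('r, 'f) struc \<Rightarrow> ('r, 'f) struc \<Rightarrow> bool" where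
  "isomorphic aF A B \<longleftrightarrow> (\<exists>h. isomorphism aF h A B)"

text \<open>Substructures of C are determined by their (function-closed) underlying sets.\<close>

definition closed_in :: "('f \<Rightarrow> nat) \<Rightarrow> ('r, 'f) struc \<Rightarrow> nat set \<Rightarrow> bool" where
  "closed_in aF C S \<longleftrightarrow> S \<subseteq> scarrier C \<and>
     (\<forall>f xs. length xs = aF f \<and> set xs \<subseteq> S \<longrightarrow> sfuns C f xs \<in> S)"

definition induced :: "('r, 'f) struc \<Rightarrow> nat set \<Rightarrow> ('r, 'f) struc" where
  "induced C S = \<lparr>scarrier = S, srels = (\<lambda>R xs. srels C R xs \<and> set xs \<subseteq> S), sfuns = sfuns C\<rparr>"

definition binom :: "('f \<Rightarrow> nat) \<Rightarrow> ('r, 'f) struc \<Rightarrow> ('r, 'f) struc \<Rightarrow> nat set set" where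
  "binom aF C A = {S. closed_in aF C S \<and> isomorphic aF A (induced C S)}"

definition class_of_finite :: "('r \<Rightarrow> nat) \<Rightarrow> ('f \<Rightarrow> nat) \<Rightarrow> ('r, 'f) struc set \<Rightarrow> bool" where
  "class_of_finite aR aF K \<longleftrightarrow> (\<forall>A\<in>K. wf_struc aR aF A \<and> finite (scarrier A))"

definition hereditary :: "('r \<Rightarrow> nat) \<Rightarrow> ('f \<Rightarrow> nat) \<Rightarrow> ('r, 'f) struc set \<Rightarrow> bool" where
  "hereditary aR aF K \<longleftrightarrow>
     (\<forall>A\<in>K. \<forall>B h. wf_struc aR aF B \<and> finite (scarrier B) \<and> embedding aF h B A \<longrightarrow> B \<in> K)"

definition joint_embedding :: "('f \<Rightarrow> nat) \<Rightarrow> ('r, 'f) struc set \<Rightarrow> bool" where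
  "joint_embedding aF K \<longleftrightarrow>
     (\<forall>A\<in>K. \<forall>B\<in>K. \<exists>C\<in>K. (\<exists>f. embedding aF f A C) \<and> (\<exists>g. embedding aF g B C))"

definition amalgamation :: "('f \<Rightarrow> nat) \<Rightarrow> ('r, 'f) struc set \<Rightarrow> bool" where
  "amalgamation aF K \<longleftrightarrow>
     (\<forall>A\<in>K. \<forall>B\<in>K. \<forall>C\<in>K. \<forall>f g. embedding aF f A B \<and> embedding aF g A C \<longrightarrow>
        (\<exists>D\<in>K. \<exists>f' g'. embedding aF f' B D \<and> embedding aF g' C D \<and>
            (\<forall>x\<in>scarrier A. f' (f x) = g' (g x))))"

definition arbitrarily_large :: "('r, 'f) struc set \<Rightarrow> bool" where
  "arbitrarily_large K \<longleftrightarrow> (\<forall>n::nat. \<exists>A\<in>K. n \<le> card (scarrier A))"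

definition fraisse_class :: "('r \<Rightarrow> nat) \<Rightarrow> ('f \<Rightarrow> nat) \<Rightarrow> ('r, 'f) struc set \<Rightarrow> bool" where
  "fraisse_class aR aF K \<longleftrightarrow> class_of_finite aR aF K \<and> hereditary aR aF K \<and>
     joint_embedding aF K \<and> amalgamation aF K \<and> arbitrarily_large K"

definition ramsey_class :: "('f \<Rightarrow> nat) \<Rightarrow> ('r, 'f) struc set \<Rightarrow> bool" where
  "ramsey_class aF K \<longleftrightarrow>
     (\<forall>A\<in>K. \<forall>B\<in>K. \<forall>k::nat. k \<ge> 2 \<longrightarrow>
        (\<exists>C\<in>K. \<forall>\<chi>::nat set \<Rightarrow> nat. \<chi> ` binom aF C A \<subseteq> {..<k} \<longrightarrow>
           (\<exists>B'\<in>binom aF C B. \<exists>c. \<forall>S\<in>binom aF (induced C B') A. \<chi> S = c)))"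

text \<open>The language L \<union> {<}: the new relation symbol is None (binary), old ones are Some R.\<close>

definition ord_arity :: "('r \<Rightarrow> nat) \<Rightarrow> 'r option \<Rightarrow> nat" where
  "ord_arity aR = (\<lambda>R. case R of None \<Rightarrow> 2 | Some R' \<Rightarrow> aR R')"

definition reduct :: "('r option, 'f) struc \<Rightarrow> ('r, 'f) struc" where
  "reduct B = \<lparr>scarrier = scarrier B, srels = (\<lambda>R. srels B (Some R)), sfuns = sfuns B\<rparr>"

definition with_order :: "('r, 'f) struc \<Rightarrow> (nat \<Rightarrow> nat \<Rightarrow> bool) \<Rightarrow> ('r option, 'f) struc" where
  "with_order A lt = \<lparr>scarrier = scarrier A,
     srels = (\<lambda>R xs. case R of
                None \<Rightarrow> (\<exists>x y. xs = [x, y] \<and> x \<in> scarrier A \<and> y \<in> scarrier A \<and> lt x y)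
              | Some R' \<Rightarrow> srels A R' xs),
     sfuns = sfuns A\<rparr>"

definition strict_linear_order_on :: "nat set \<Rightarrow> (nat \<Rightarrow> nat \<Rightarrow> bool) \<Rightarrow> bool" where
  "strict_linear_order_on X lt \<longleftrightarrow>
     (\<forall>x\<in>X. \<not> lt x x) \<and>
     (\<forall>x\<in>X. \<forall>y\<in>X. \<forall>z\<in>X. lt x y \<and> lt y z \<longrightarrow> lt x z) \<and>
     (\<forall>x\<in>X. \<forall>y\<in>X. x \<noteq> y \<longrightarrow> lt x y \<or> lt y x)"

definition ordered_class :: "('r option, 'f) struc set \<Rightarrow> bool" where
  "ordered_class Ks \<longleftrightarrow>
     (\<forall>B\<in>Ks. strict_linear_order_on (scarrier B) (\<lambda>x y. srels B None [x, y]))"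

definition admissible :: "('r option, 'f) struc set \<Rightarrow> ('r, 'f) struc \<Rightarrow> (nat \<Rightarrow> nat \<Rightarrow> bool) \<Rightarrow> bool" where
  "admissible Ks A lt \<longleftrightarrow> with_order A lt \<in> Ks"

definition reasonable :: "('f \<Rightarrow> nat) \<Rightarrow> ('r option, 'f) struc set \<Rightarrow> bool" where
  "reasonable aF Ks \<longleftrightarrow>
     (\<forall>A\<in>reduct ` Ks. \<forall>B\<in>reduct ` Ks. \<forall>a ltA. embedding aF a A B \<and> admissible Ks A ltA \<longrightarrow>
        (\<exists>ltB. admissible Ks B ltB \<and> embedding aF a (with_order A ltA) (with_order B ltB)))"

definition forgetful :: "('f \<Rightarrow> nat) \<Rightarrow> ('r option, 'f) struc set \<Rightarrow> bool" where
  "forgetful aF Ks \<longleftrightarrow>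
     (\<forall>A\<in>reduct ` Ks. \<forall>B\<in>reduct ` Ks. \<forall>ltA ltB.
        isomorphic aF A B \<and> admissible Ks A ltA \<and> admissible Ks B ltB \<longrightarrow>
        isomorphic aF (with_order A ltA) (with_order B ltB))"

end

theory Submission
  imports Defs
begin

text \<open>Fix one order type for each isomorphism type in K, and let K* consist of the expansions
  of members of K by linear orders that are coherent with this choice, i.e. give every
  substructure its chosen order type. Such a choice exists by compactness once it exists for
  finitely many structures, and for finitely many structures it is obtained by pulling back one
  order on a common extension D in which isomorphic substructures carry isomorphic orders: the
  Ramsey property yields such an order, since in a large enough structure every ordering admits a
  copy of D on which all copies of each substructure are ordered alike. Forgetfulness is built
  into K*; heredity, joint embedding and reasonableness hold because all coherent orders on a
  structure are isomorphic, and amalgamation uses the Ramsey property once more together with the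
  rigidity of finite linear orders.\<close>

lemma scarrier_with_order [simp]: "scarrier (with_order A l) = scarrier A"
  and sfuns_with_order [simp]: "sfuns (with_order A l) = sfuns A"
  and srels_with_order_Some [simp]: "srels (with_order A l) (Some R) = srels A R"
  and srels_with_order_None: "srels (with_order A l) None xs \<longleftrightarrow>
        (\<exists>x y. xs = [x, y] \<and> x \<in> scarrier A \<and> y \<in> scarrier A \<and> l x y)"
  by (simp_all add: with_order_def)

lemma srels_with_order_pair [simp]:
  "srels (with_order A l) None [x, y] \<longleftrightarrow> x \<in> scarrier A \<and> y \<in> scarrier A \<and> l x y"
  by (simp add: srels_with_order_None)

lemma scarrier_induced [simp]: "scarrier (induced C S) = S"
  and sfuns_induced [simp]: "sfuns (induced C S) = sfuns C"
  and srels_induced: "srels (induced C S) R xs \<longleftrightarrow> srels C R xs \<and> set xs \<subseteq> S"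
  by (simp_all add: induced_def)

lemma scarrier_reduct [simp]: "scarrier (reduct B) = scarrier B"
  and sfuns_reduct [simp]: "sfuns (reduct B) = sfuns B"
  and srels_reduct [simp]: "srels (reduct B) R = srels B (Some R)"
  by (simp_all add: reduct_def)

lemma reduct_with_order [simp]: "reduct (with_order A l) = A"
  by (simp add: reduct_def with_order_def)

lemma with_order_cong:
  "(\<And>x y. x \<in> scarrier A \<Longrightarrow> y \<in> scarrier A \<Longrightarrow> l x y = l' x y) \<Longrightarrow> with_order A l = with_order A l'"
  unfolding with_order_def by (auto simp: fun_eq_iff split: option.splits)

lemma with_order_reduct:
  assumes "wf_struc (ord_arity aR) aF B"
  shows "with_order (reduct B) (\<lambda>x y. srels B None [x, y]) = B"
proof (rule struc.equality)
  have "srels B None xs \<Longrightarrow> \<exists>x y. xs = [x, y] \<and> x \<in> scarrier B \<and> y \<in> scarrier B" for xs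
    using assms unfolding wf_struc_def ord_arity_def
    by (fastforce simp: numeral_2_eq_2 length_Suc_conv)
  then show "srels (with_order (reduct B) (\<lambda>x y. srels B None [x, y])) = srels B"
    by (auto simp: fun_eq_iff with_order_def split: option.split) blast+
qed (simp_all add: with_order_def)

lemma wf_struc_with_order: "wf_struc aR aF A \<Longrightarrow> wf_struc (ord_arity aR) aF (with_order A l)"
  unfolding wf_struc_def by (auto simp: with_order_def ord_arity_def split: option.splits)

lemma wf_struc_reduct: "wf_struc (ord_arity aR) aF B \<Longrightarrow> wf_struc aR aF (reduct B)"
  unfolding wf_struc_def by (auto simp: ord_arity_def)

lemma wf_struc_closed_in_carrier: "wf_struc aR aF A \<Longrightarrow> closed_in aF A (scarrier A)"
  by (simp add: wf_struc_def closed_in_def)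

lemma closed_in_subset: "closed_in aF C S \<Longrightarrow> S \<subseteq> scarrier C"
  by (simp add: closed_in_def)

lemma closed_in_with_order [simp]: "closed_in aF (with_order A l) S \<longleftrightarrow> closed_in aF A S"
  by (simp add: closed_in_def)

lemma closed_in_induced_iff:
  "T \<subseteq> scarrier C \<Longrightarrow> closed_in aF (induced C T) S \<longleftrightarrow> S \<subseteq> T \<and> closed_in aF C S"
  unfolding closed_in_def by auto

lemma closed_in_induced_carrier: "closed_in aF C S \<Longrightarrow> closed_in aF (induced C S) S"
  by (simp add: closed_in_def)

lemma wf_struc_induced: "wf_struc aR aF C \<Longrightarrow> closed_in aF C S \<Longrightarrow> wf_struc aR aF (induced C S)"
  unfolding wf_struc_def closed_in_def by (auto simp: srels_induced)

lemma induced_carrier: "wf_struc aR aF B \<Longrightarrow> induced B (scarrier B) = B"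
  by (rule struc.equality) (auto simp: wf_struc_def fun_eq_iff srels_induced subset_iff)

lemma induced_induced: "S \<subseteq> T \<Longrightarrow> induced (induced C T) S = induced C S"
  unfolding induced_def by (auto simp: fun_eq_iff)

lemma embedding_id: "embedding aF id A A"
  by (simp add: embedding_def)

lemma embedding_comp:
  assumes h: "embedding aF h A B" and g: "embedding aF g B C"
  shows "embedding aF (g \<circ> h) A C"
proof -
  have hA: "set (map h xs) \<subseteq> scarrier B" if "set xs \<subseteq> scarrier A" for xs
    using h that by (auto simp: embedding_def)
  show ?thesis unfolding embedding_def
  proof (intro conjI allI impI)
    show "inj_on (g \<circ> h) (scarrier A)"
      using h g by (auto simp: embedding_def intro: comp_inj_on inj_on_subset)
    show "(g \<circ> h) ` scarrier A \<subseteq> scarrier C"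
      using h g by (auto simp: embedding_def)
  next
    fix R xs assume "set xs \<subseteq> scarrier A"
    then show "srels C R (map (g \<circ> h) xs) = srels A R xs"
      using h g hA unfolding embedding_def by (metis map_map)
  next
    fix f xs assume "length xs = aF f \<and> set xs \<subseteq> scarrier A"
    then show "(g \<circ> h) (sfuns A f xs) = sfuns C f (map (g \<circ> h) xs)"
      using h g hA unfolding embedding_def by (metis comp_apply length_map map_map)
  qed
qed

lemma embedding_inj_on: "embedding aF h A B \<Longrightarrow> inj_on h (scarrier A)"
  and embedding_image_subset: "embedding aF h A B \<Longrightarrow> h ` scarrier A \<subseteq> scarrier B"
  by (simp_all add: embedding_def)

lemma isomorphism_imp_embedding: "isomorphism aF h A B \<Longrightarrow> embedding aF h A B"
  by (simp add: isomorphism_def)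

lemma isomorphism_id: "isomorphism aF id A A"
  by (simp add: isomorphism_def embedding_id)

lemma isomorphism_comp:
  "isomorphism aF h A B \<Longrightarrow> isomorphism aF g B C \<Longrightarrow> isomorphism aF (g \<circ> h) A C"
  unfolding isomorphism_def by (metis embedding_comp image_comp)

lemma isomorphism_inv_into:
  assumes h: "isomorphism aF h A B" and cA: "closed_in aF A (scarrier A)"
  shows "isomorphism aF (inv_into (scarrier A) h) B A"
proof -
  let ?g = "inv_into (scarrier A) h"
  have inj: "inj_on h (scarrier A)" and im: "h ` scarrier A = scarrier B"
    and rel: "\<And>R xs. set xs \<subseteq> scarrier A \<Longrightarrow> srels B R (map h xs) = srels A R xs"
    and fn: "\<And>f xs. length xs = aF f \<Longrightarrow> set xs \<subseteq> scarrier A \<Longrightarrow>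
                h (sfuns A f xs) = sfuns B f (map h xs)"
    using h unfolding isomorphism_def embedding_def by auto
  have gB: "?g y \<in> scarrier A" and hg: "h (?g y) = y" if "y \<in> scarrier B" for y
    using that im by (auto intro: inv_into_into f_inv_into_f)
  have map_hg: "map h (map ?g ys) = ys" if "set ys \<subseteq> scarrier B" for ys
    using that hg by (induct ys) auto
  have set_g: "set (map ?g ys) \<subseteq> scarrier A" if "set ys \<subseteq> scarrier B" for ys
    using that gB by auto
  show ?thesis unfolding isomorphism_def embedding_def
  proof (intro conjI allI impI)
    show "inj_on ?g (scarrier B)" by (rule inj_on_inv_into) (simp add: im)
    show "?g ` scarrier B = scarrier A"
      using im inv_into_image_cancel[OF inj subset_refl] by simp
    then show "?g ` scarrier B \<subseteq> scarrier A" by simp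
  next
    fix R ys assume "set ys \<subseteq> scarrier B"
    then show "srels A R (map ?g ys) = srels B R ys"
      using rel[OF set_g] map_hg by simp
  next
    fix f ys assume ys: "length ys = aF f \<and> set ys \<subseteq> scarrier B"
    then have "h (sfuns A f (map ?g ys)) = sfuns B f ys"
      using fn[of "map ?g ys" f] map_hg set_g by simp
    moreover have "sfuns A f (map ?g ys) \<in> scarrier A"
      using cA ys set_g unfolding closed_in_def by simp
    ultimately show "?g (sfuns B f ys) = sfuns A f (map ?g ys)"
      using inj by (metis inv_into_f_f)
  qed
qed
lemma isomorphic_refl: "isomorphic aF A A"
  using isomorphism_id isomorphic_def by blast

lemma isomorphic_sym: "isomorphic aF A B \<Longrightarrow> closed_in aF A (scarrier A) \<Longrightarrow> isomorphic aF B A"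
  using isomorphism_inv_into isomorphic_def by blast

lemma isomorphic_trans [trans]: "isomorphic aF A B \<Longrightarrow> isomorphic aF B C \<Longrightarrow> isomorphic aF A C"
  unfolding isomorphic_def using isomorphism_comp by blast

lemma embedding_with_order_iff:
  "embedding aF h (with_order A l) (with_order B l') \<longleftrightarrow>
   embedding aF h A B \<and> (\<forall>x\<in>scarrier A. \<forall>y\<in>scarrier A. l' (h x) (h y) = l x y)"
proof -
  have order_part:
    "(\<forall>xs. set xs \<subseteq> scarrier A \<longrightarrow> srels (with_order B l') None (map h xs) = srels (with_order A l) None xs)
     \<longleftrightarrow> (\<forall>x\<in>scarrier A. \<forall>y\<in>scarrier A. l' (h x) (h y) = l x y)"
    if hA: "h ` scarrier A \<subseteq> scarrier B"
  proof
    assume "\<forall>xs. set xs \<subseteq> scarrier A \<longrightarrow> srels (with_order B l') None (map h xs) = srels (with_order A l) None xs"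
    then show "\<forall>x\<in>scarrier A. \<forall>y\<in>scarrier A. l' (h x) (h y) = l x y"
      using hA by (force dest: spec[of _ "[_, _]"])
  next
    assume "\<forall>x\<in>scarrier A. \<forall>y\<in>scarrier A. l' (h x) (h y) = l x y"
    then show "\<forall>xs. set xs \<subseteq> scarrier A \<longrightarrow> srels (with_order B l') None (map h xs) = srels (with_order A l) None xs"
      using hA by (auto simp: srels_with_order_None image_subset_iff)
  qed
  show ?thesis
    unfolding embedding_def split_option_all srels_with_order_Some scarrier_with_order sfuns_with_order
    using order_part by blast
qed

lemma isomorphism_with_order_iff:
  "isomorphism aF h (with_order A l) (with_order B l') \<longleftrightarrow>
   isomorphism aF h A B \<and> (\<forall>x\<in>scarrier A. \<forall>y\<in>scarrier A. l' (h x) (h y) = l x y)"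
  unfolding isomorphism_def by (auto simp: embedding_with_order_iff)

lemma embedding_inclusion: "S \<subseteq> scarrier C \<Longrightarrow> embedding aF id (induced C S) C"
  unfolding embedding_def by (auto simp: srels_induced)

lemma embedding_into_induced:
  assumes "embedding aF h X C" and "h ` scarrier X \<subseteq> S"
  shows "embedding aF h X (induced C S)"
  using assms unfolding embedding_def by (auto simp: srels_induced image_subset_iff)
lemma embedding_restrict:
  "embedding aF h X Y \<Longrightarrow> S \<subseteq> scarrier X \<Longrightarrow> embedding aF h (induced X S) Y"
  using embedding_comp[OF embedding_inclusion, of S X aF h Y] by simp

lemma isomorphism_onto_induced_imp_embedding:
  "isomorphism aF h X (induced Y S) \<Longrightarrow> S \<subseteq> scarrier Y \<Longrightarrow> embedding aF h X Y"
  using embedding_comp[OF isomorphism_imp_embedding embedding_inclusion, of aF h X Y S] by simp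

lemma closed_in_image:
  assumes e: "embedding aF h X Y" and c: "closed_in aF X S"
  shows "closed_in aF Y (h ` S)"
  unfolding closed_in_def
proof (intro conjI allI impI)
  have SX: "S \<subseteq> scarrier X" using c by (rule closed_in_subset)
  then show "h ` S \<subseteq> scarrier Y"
    using e by (auto simp: embedding_def)
  fix f ys assume ys: "length ys = aF f \<and> set ys \<subseteq> h ` S"
  define xs where "xs = map (inv_into S h) ys"
  have xs: "set xs \<subseteq> S" "ys = map h xs"
    using ys by (auto simp: xs_def inv_into_into f_inv_into_f intro!: map_idI[symmetric])
  then have "sfuns Y f ys = h (sfuns X f xs)"
    using e ys SX unfolding embedding_def by auto
  moreover have "sfuns X f xs \<in> S"
    using c xs ys unfolding closed_in_def by auto
  ultimately show "sfuns Y f ys \<in> h ` S" by simp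
qed

lemma isomorphism_induced_image:
  "embedding aF h X Y \<Longrightarrow> S \<subseteq> scarrier X \<Longrightarrow> isomorphism aF h (induced X S) (induced Y (h ` S))"
  unfolding isomorphism_def by (simp add: embedding_into_induced embedding_restrict)

lemma isomorphic_with_order_induced_image:
  assumes "embedding aF h X Y" and "S \<subseteq> scarrier X"
  shows "isomorphic aF (with_order (induced X S) (\<lambda>x y. l (h x) (h y))) (with_order (induced Y (h ` S)) l)"
  using isomorphism_induced_image[OF assms]
  unfolding isomorphic_def by (auto simp: isomorphism_with_order_iff)

lemma binom_iff:
  "S \<in> binom aF C A \<longleftrightarrow> closed_in aF C S \<and> (\<exists>h. isomorphism aF h A (induced C S))"
  unfolding binom_def isomorphic_def by simp

lemma binom_carrier: "wf_struc aR aF B \<Longrightarrow> scarrier B \<in> binom aF B B"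
  using wf_struc_closed_in_carrier isomorphism_id by (fastforce simp: binom_iff induced_carrier)

lemma binom_image:
  assumes e: "embedding aF h X Y" and S: "S \<in> binom aF X A"
  shows "h ` S \<in> binom aF Y A"
proof -
  obtain g where g: "isomorphism aF g A (induced X S)" and c: "closed_in aF X S"
    using S binom_iff by blast
  have "isomorphism aF (h \<circ> g) A (induced Y (h ` S))"
    using isomorphism_comp[OF g isomorphism_induced_image[OF e closed_in_subset[OF c]]] .
  then show ?thesis
    using closed_in_image[OF e c] binom_iff by blast
qed

lemma image_carrier_in_binom:
  "wf_struc aR aF A \<Longrightarrow> embedding aF h A Z \<Longrightarrow> h ` scarrier A \<in> binom aF Z A"
  using binom_image binom_carrier by blast

lemma binom_induced_iff:
  "T \<subseteq> scarrier C \<Longrightarrow> S \<in> binom aF (induced C T) A \<longleftrightarrow> S \<subseteq> T \<and> S \<in> binom aF C A"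
  by (auto simp: binom_iff closed_in_induced_iff induced_induced)

section \<open>Finite linear orders\<close>

lemma strict_linear_order_on_cong:
  "(\<And>x y. x \<in> X \<Longrightarrow> y \<in> X \<Longrightarrow> l x y = l' x y) \<Longrightarrow>
   strict_linear_order_on X l \<longleftrightarrow> strict_linear_order_on X l'"
  unfolding strict_linear_order_on_def by simp

lemma strict_linear_order_on_pullback:
  assumes "strict_linear_order_on Y l" and "inj_on g X" and "g ` X \<subseteq> Y"
  shows "strict_linear_order_on X (\<lambda>x y. l (g x) (g y))"
  using assms unfolding strict_linear_order_on_def inj_on_def by (smt (verit) image_subset_iff)

lemma strict_linear_order_on_less: "strict_linear_order_on X ((<) :: nat \<Rightarrow> nat \<Rightarrow> bool)"
  unfolding strict_linear_order_on_def by auto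

lemma card_predecessors_image:
  assumes "inj_on u A" and "\<And>x y. x \<in> A \<Longrightarrow> y \<in> A \<Longrightarrow> l' (u x) (u y) = l x y" and "x \<in> A"
  shows "card {t \<in> u ` A. l' t (u x)} = card {z \<in> A. l z x}"
proof -
  have "{t \<in> u ` A. l' t (u x)} = u ` {z \<in> A. l z x}" using assms(2,3) by auto
  moreover have "inj_on u {z \<in> A. l z x}" using assms(1) by (rule inj_on_subset) auto
  ultimately show ?thesis by (simp add: card_image)
qed

lemma card_predecessors_inj:
  assumes l: "strict_linear_order_on A l" and fin: "finite A" and "x \<in> A" "y \<in> A"
    and eq: "card {z \<in> A. l z x} = card {z \<in> A. l z y}"
  shows "x = y"
proof (rule ccontr)
  have less: "card {z \<in> A. l z p} < card {z \<in> A. l z q}" if "p \<in> A" "q \<in> A" "l p q" for p q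
  proof (rule psubset_card_mono)
    have "\<not> l p p" and "\<And>z. z \<in> A \<Longrightarrow> l z p \<Longrightarrow> l z q"
      using l that unfolding strict_linear_order_on_def by blast+
    then show "{z \<in> A. l z p} \<subset> {z \<in> A. l z q}"
      using that by blast
  qed (use fin in simp)
  assume "x \<noteq> y"
  then have "l x y \<or> l y x" using l \<open>x \<in> A\<close> \<open>y \<in> A\<close> unfolding strict_linear_order_on_def by blast
  then show False using less[of x y] less[of y x] eq \<open>x \<in> A\<close> \<open>y \<in> A\<close> by auto
qed

text \<open>Rigidity: a point of a finite linear order is determined by its number of predecessors.\<close>

lemma order_embeddings_eq_if_image_eq:
  assumes l: "strict_linear_order_on A l" and fin: "finite A"
    and u: "inj_on u A" "\<And>x y. x \<in> A \<Longrightarrow> y \<in> A \<Longrightarrow> l' (u x) (u y) = l x y"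
    and v: "inj_on v A" "\<And>x y. x \<in> A \<Longrightarrow> y \<in> A \<Longrightarrow> l' (v x) (v y) = l x y"
    and im: "u ` A = v ` A" and x: "x \<in> A"
  shows "u x = v x"
proof -
  obtain y where y: "y \<in> A" "v x = u y" using im x by (metis imageE imageI)
  have "card {z \<in> A. l z x} = card {t \<in> v ` A. l' t (v x)}"
    using card_predecessors_image[where l=l and l'=l', OF v x] by simp
  also have "\<dots> = card {t \<in> u ` A. l' t (u y)}" using im y by simp
  also have "\<dots> = card {z \<in> A. l z y}" using card_predecessors_image[where l=l and l'=l', OF u y(1)] .
  finally have "x = y" using card_predecessors_inj[OF l fin x y(1)] by blast
  then show ?thesis using y by simp
qed

section \<open>Compactness\<close>

definition solves :: "('i \<Rightarrow> 'v set) \<Rightarrow> ('i \<times> 'v) set \<Rightarrow> (('i \<Rightarrow> 'v) \<Rightarrow> bool) set \<Rightarrow> ('i \<Rightarrow> 'v) \<Rightarrow> bool"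
  where "solves F q \<Gamma> \<tau> \<longleftrightarrow> (\<forall>i. \<tau> i \<in> F i) \<and> (\<forall>(i, v)\<in>q. \<tau> i = v) \<and> (\<forall>c\<in>\<Gamma>. c \<tau>)"

definition finitely_consistent ::
    "('i \<Rightarrow> 'v set) \<Rightarrow> (('i \<Rightarrow> 'v) \<Rightarrow> bool) set \<Rightarrow> ('i \<times> 'v) set \<Rightarrow> bool" where
  "finitely_consistent F Cs P \<longleftrightarrow>
     (\<forall>q \<Gamma>. q \<subseteq> P \<longrightarrow> finite q \<longrightarrow> \<Gamma> \<subseteq> Cs \<longrightarrow> finite \<Gamma> \<longrightarrow> (\<exists>\<tau>. solves F q \<Gamma> \<tau>))"

lemma solves_mono: "solves F q \<Gamma> \<tau> \<Longrightarrow> q' \<subseteq> q \<Longrightarrow> \<Gamma>' \<subseteq> \<Gamma> \<Longrightarrow> solves F q' \<Gamma>' \<tau>"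
  unfolding solves_def by fast

lemma finitely_consistentD:
  "finitely_consistent F Cs P \<Longrightarrow> q \<subseteq> P \<Longrightarrow> finite q \<Longrightarrow> \<Gamma> \<subseteq> Cs \<Longrightarrow> finite \<Gamma> \<Longrightarrow>
   \<exists>\<tau>. solves F q \<Gamma> \<tau>"
  unfolding finitely_consistent_def by blast

lemma finite_subset_Union_chain:
  assumes "finite q" "q \<subseteq> \<Union>C" "C \<noteq> {}" "chain\<^sub>\<subseteq> C"
  shows "\<exists>X\<in>C. q \<subseteq> X"
  using assms
proof (induction q rule: finite_induct)
  case (insert x q)
  then obtain X Y where XY: "X \<in> C" "q \<subseteq> X" "Y \<in> C" "x \<in> Y" by blast
  then have "X \<subseteq> Y \<or> Y \<subseteq> X" using insert.prems(3) unfolding chain_subset_def by blast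
  then show ?case using XY by blast
qed auto

lemma finitely_consistent_Union_chain:
  assumes sat: "\<And>\<Gamma>. \<Gamma> \<subseteq> Cs \<Longrightarrow> finite \<Gamma> \<Longrightarrow> \<exists>\<tau>. solves F {} \<Gamma> \<tau>"
    and C: "C \<in> chains {P. finitely_consistent F Cs P}"
  shows "finitely_consistent F Cs (\<Union>C)"
  unfolding finitely_consistent_def
proof (intro allI impI)
  fix q \<Gamma> assume q: "q \<subseteq> \<Union>C" "finite q" and \<Gamma>: "\<Gamma> \<subseteq> Cs" "finite \<Gamma>"
  show "\<exists>\<tau>. solves F q \<Gamma> \<tau>"
  proof (cases "C = {}")
    case True
    then show ?thesis using q sat[OF \<Gamma>] by simp
  next
    case False
    then obtain X where "X \<in> C" "q \<subseteq> X"
      using finite_subset_Union_chain[of q C] q C by (auto simp: chains_def)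
    moreover have "finitely_consistent F Cs X" using C \<open>X \<in> C\<close> by (auto simp: chains_def)
    ultimately show ?thesis using q \<Gamma> finitely_consistentD by blast
  qed
qed

text \<open>If no value for the coordinate i can be added to a maximal M, each value v \<in> F i is
  refuted by a finite part of M and finitely many constraints; together these finitely many
  refutations form a finite part of M and finitely many constraints that no assignment solves.\<close>

lemma maximal_finitely_consistent_total:
  assumes fin: "finite (F i)" and M: "finitely_consistent F Cs M"
    and max: "\<And>X. finitely_consistent F Cs X \<Longrightarrow> M \<subseteq> X \<Longrightarrow> X = M"
  shows "\<exists>v. (i, v) \<in> M"
proof (rule ccontr)
  assume none: "\<nexists>v. (i, v) \<in> M"
  define refutes where "refutes v qG \<longleftrightarrow> fst qG \<subseteq> M \<and> finite (fst qG) \<and> snd qG \<subseteq> Cs \<and>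
    finite (snd qG) \<and> (\<nexists>\<tau>. solves F (insert (i, v) (fst qG)) (snd qG) \<tau>)" for v qG
  have "\<exists>qG. refutes v qG" for v
  proof -
    have "insert (i, v) M \<noteq> M" using none by (metis insertI1)
    then have "\<not> finitely_consistent F Cs (insert (i, v) M)" using max[of "insert (i, v) M"] by blast
    then obtain q \<Gamma> where q: "q \<subseteq> insert (i, v) M" "finite q" "\<Gamma> \<subseteq> Cs" "finite \<Gamma>"
      and unsat: "\<nexists>\<tau>. solves F q \<Gamma> \<tau>"
      unfolding finitely_consistent_def by blast
    have "q \<subseteq> insert (i, v) (q - {(i, v)})" by blast
    then have "\<nexists>\<tau>. solves F (insert (i, v) (q - {(i, v)})) \<Gamma> \<tau>"
      using unsat solves_mono by blast
    then have "refutes v (q - {(i, v)}, \<Gamma>)" using q by (auto simp: refutes_def)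
    then show ?thesis ..
  qed
  then obtain qG where qG: "\<And>v. refutes v (qG v)" by metis
  have "(\<Union>v\<in>F i. fst (qG v)) \<subseteq> M" "finite (\<Union>v\<in>F i. fst (qG v))"
    "(\<Union>v\<in>F i. snd (qG v)) \<subseteq> Cs" "finite (\<Union>v\<in>F i. snd (qG v))"
    using qG fin by (auto simp: refutes_def)
  then obtain \<tau> where \<tau>: "solves F (\<Union>v\<in>F i. fst (qG v)) (\<Union>v\<in>F i. snd (qG v)) \<tau>"
    using finitely_consistentD[OF M] by blast
  then have "\<tau> i \<in> F i" by (simp add: solves_def)
  then have "solves F (fst (qG (\<tau> i))) (snd (qG (\<tau> i))) \<tau>"
    using solves_mono[OF \<tau>] by blast
  then have "solves F (insert (i, \<tau> i) (fst (qG (\<tau> i)))) (snd (qG (\<tau> i))) \<tau>"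
    unfolding solves_def by (elim conjE) (intro conjI; simp)
  then show False using qG[of "\<tau> i"] unfolding refutes_def by blast
qed

text \<open>Compactness of a product of finite discrete spaces (Tychonoff), via a Zorn-maximal finitely
  consistent partial assignment.\<close>

lemma finitely_satisfiable_imp_satisfiable:
  fixes F :: "'i \<Rightarrow> 'v set" and Cs :: "(('i \<Rightarrow> 'v) \<Rightarrow> bool) set"
  assumes fin: "\<And>i. finite (F i)"
    and supp: "\<And>c. c \<in> Cs \<Longrightarrow> \<exists>s. finite s \<and> (\<forall>\<tau> \<tau>'. (\<forall>i\<in>s. \<tau> i = \<tau>' i) \<longrightarrow> c \<tau> = c \<tau>')"
    and sat: "\<And>\<Gamma>. \<Gamma> \<subseteq> Cs \<Longrightarrow> finite \<Gamma> \<Longrightarrow> \<exists>\<tau>. (\<forall>i. \<tau> i \<in> F i) \<and> (\<forall>c\<in>\<Gamma>. c \<tau>)"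
  shows "\<exists>\<tau>. (\<forall>i. \<tau> i \<in> F i) \<and> (\<forall>c\<in>Cs. c \<tau>)"
proof -
  have sat': "\<exists>\<tau>. solves F {} \<Gamma> \<tau>" if "\<Gamma> \<subseteq> Cs" "finite \<Gamma>" for \<Gamma>
    using sat[OF that] by (simp add: solves_def)
  have "\<forall>C\<in>chains {P. finitely_consistent F Cs P}. \<Union>C \<in> {P. finitely_consistent F Cs P}"
    using finitely_consistent_Union_chain[OF sat'] by blast
  then obtain M where M: "finitely_consistent F Cs M"
    and max: "\<And>X. finitely_consistent F Cs X \<Longrightarrow> M \<subseteq> X \<Longrightarrow> X = M"
    using Zorn_Lemma[of "{P. finitely_consistent F Cs P}"] by blast
  obtain \<tau> where \<tau>: "\<And>i. (i, \<tau> i) \<in> M"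
    using maximal_finitely_consistent_total[OF fin M max] by metis
  have agree: "\<exists>\<sigma>. solves F ((\<lambda>i. (i, \<tau> i)) ` s) \<Gamma> \<sigma>"
    if "finite s" "\<Gamma> \<subseteq> Cs" "finite \<Gamma>" for s \<Gamma>
  proof (rule finitely_consistentD[OF M _ _ that(2,3)])
    show "(\<lambda>i. (i, \<tau> i)) ` s \<subseteq> M" using \<tau> by blast
  qed (use that(1) in simp)
  show ?thesis
  proof (intro exI conjI allI ballI)
    show "\<tau> i \<in> F i" for i using agree[of "{i}" "{}"] by (auto simp: solves_def) metis
  next
    fix c assume c: "c \<in> Cs"
    then obtain s where s: "finite s" "\<forall>\<tau> \<tau>'. (\<forall>i\<in>s. \<tau> i = \<tau>' i) \<longrightarrow> c \<tau> = c \<tau>'"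
      using supp by blast
    then obtain \<sigma> where "solves F ((\<lambda>i. (i, \<tau> i)) ` s) {c} \<sigma>" using agree[of s "{c}"] c by auto
    then have "\<forall>i\<in>s. \<sigma> i = \<tau> i" "c \<sigma>" by (auto simp: solves_def)
    then show "c \<tau>" using s(2) by metis
  qed
qed

locale fraisse =
  fixes aR :: "'r \<Rightarrow> nat" and aF :: "'f \<Rightarrow> nat" and K :: "('r, 'f) struc set"
  assumes fraisse: "fraisse_class aR aF K"
begin

lemma wf_struc_member: "A \<in> K \<Longrightarrow> wf_struc aR aF A"
  and finite_member: "A \<in> K \<Longrightarrow> finite (scarrier A)"
  using fraisse by (simp_all add: fraisse_class_def class_of_finite_def)

lemma closed_in_carrier_member: "A \<in> K \<Longrightarrow> closed_in aF A (scarrier A)"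
  by (rule wf_struc_closed_in_carrier[OF wf_struc_member])

lemma induced_member:
  assumes "C \<in> K" and "closed_in aF C S"
  shows "induced C S \<in> K"
proof -
  have "wf_struc aR aF (induced C S)"
    using wf_struc_induced[OF wf_struc_member[OF assms(1)] assms(2)] .
  moreover have "finite (scarrier (induced C S))"
    using finite_subset[OF closed_in_subset[OF assms(2)] finite_member[OF assms(1)]] by simp
  moreover have "embedding aF id (induced C S) C"
    using embedding_inclusion[OF closed_in_subset[OF assms(2)]] .
  ultimately show ?thesis
    using fraisse assms(1) unfolding fraisse_class_def hereditary_def by blast
qed

lemma joint_embedding:
  "A \<in> K \<Longrightarrow> B \<in> K \<Longrightarrow> \<exists>C\<in>K. (\<exists>f. embedding aF f A C) \<and> (\<exists>g. embedding aF g B C)"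
  using fraisse unfolding fraisse_class_def joint_embedding_def by blast

lemma amalgamation:
  "A \<in> K \<Longrightarrow> B \<in> K \<Longrightarrow> C \<in> K \<Longrightarrow> embedding aF f A B \<Longrightarrow> embedding aF g A C \<Longrightarrow>
   \<exists>D\<in>K. \<exists>f' g'. embedding aF f' B D \<and> embedding aF g' C D \<and> (\<forall>x\<in>scarrier A. f' (f x) = g' (g x))"
  using fraisse unfolding fraisse_class_def amalgamation_def by blast

lemma nonempty: "K \<noteq> {}"
  using fraisse unfolding fraisse_class_def arbitrarily_large_def by blast

lemma joint_embedding_finite:
  "finite M \<Longrightarrow> M \<subseteq> K \<Longrightarrow> \<exists>D\<in>K. \<forall>X\<in>M. \<exists>e. embedding aF e X D"
proof (induction M rule: finite_induct)
  case empty
  then show ?case using nonempty by blast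
next
  case (insert X M)
  then obtain D where D: "D \<in> K" "\<forall>Y\<in>M. \<exists>e. embedding aF e Y D" by blast
  obtain E f g where E: "E \<in> K" and f: "embedding aF f D E" and g: "embedding aF g X E"
    using joint_embedding[OF D(1)] insert.prems by blast
  have "\<exists>e. embedding aF e Y E" if "Y \<in> M" for Y
    using D(2) that embedding_comp[OF _ f] by blast
  then show ?case using E g by blast
qed

lemma amalgamation_self_embeddings:
  assumes A: "A \<in> K" and B: "B \<in> K" and a: "embedding aF a A B"
  shows "finite \<Sigma> \<Longrightarrow> (\<And>\<sigma>. \<sigma> \<in> \<Sigma> \<Longrightarrow> embedding aF \<sigma> A A) \<Longrightarrow>
    \<exists>D\<in>K. \<exists>p0. embedding aF p0 B D \<and>
      (\<forall>\<sigma>\<in>\<Sigma>. \<exists>p. embedding aF p B D \<and> (\<forall>x\<in>scarrier A. p (a x) = p0 (a (\<sigma> x))))"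
proof (induction \<Sigma> rule: finite_induct)
  case empty
  then show ?case using B embedding_id by blast
next
  case (insert \<sigma> \<Sigma>)
  then obtain D p0 where D: "D \<in> K" and p0: "embedding aF p0 B D"
    and IH: "\<forall>\<sigma>\<in>\<Sigma>. \<exists>p. embedding aF p B D \<and> (\<forall>x\<in>scarrier A. p (a x) = p0 (a (\<sigma> x)))"
    by blast
  have "embedding aF (p0 \<circ> a \<circ> \<sigma>) A D"
    using embedding_comp[OF _ embedding_comp[OF a p0]] insert.prems by blast
  then obtain D' u v where D': "D' \<in> K" and u: "embedding aF u D D'" and v: "embedding aF v B D'"
    and uv: "\<forall>x\<in>scarrier A. u ((p0 \<circ> a \<circ> \<sigma>) x) = v (a x)"
    using amalgamation[OF A D B _ a] by blast
  have extend: "\<exists>p. embedding aF p B D' \<and> (\<forall>x\<in>scarrier A. p (a x) = (u \<circ> p0) (a (\<tau> x)))"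
    if "\<tau> \<in> insert \<sigma> \<Sigma>" for \<tau>
  proof (cases "\<tau> = \<sigma>")
    case True
    then show ?thesis using v uv by auto
  next
    case False
    then have "\<tau> \<in> \<Sigma>" using that by simp
    then obtain p where p: "embedding aF p B D" "\<forall>x\<in>scarrier A. p (a x) = p0 (a (\<tau> x))"
      using bspec[OF IH] by blast
    show ?thesis
      using embedding_comp[OF p(1) u] p(2) by (intro exI[of _ "u \<circ> p"]) simp
  qed
  show ?case
  proof (rule bexI[OF _ D'], rule exI[of _ "u \<circ> p0"], rule conjI)
    show "embedding aF (u \<circ> p0) B D'" by (rule embedding_comp[OF p0 u])
  qed (use extend in blast)
qed

end

definition order_uniform :: "('f \<Rightarrow> nat) \<Rightarrow> ('r, 'f) struc \<Rightarrow> (nat \<Rightarrow> nat \<Rightarrow> bool) \<Rightarrow> ('r, 'f) struc \<Rightarrow> bool"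
  where "order_uniform aF X l A \<longleftrightarrow> (\<forall>S\<in>binom aF X A. \<forall>S'\<in>binom aF X A.
     isomorphic aF (with_order (induced X S) l) (with_order (induced X S') l))"

lemma order_uniform_cong:
  assumes "\<And>x y. x \<in> scarrier X \<Longrightarrow> y \<in> scarrier X \<Longrightarrow> l x y = l' x y"
  shows "order_uniform aF X l A \<longleftrightarrow> order_uniform aF X l' A"
proof -
  have "with_order (induced X S) l = with_order (induced X S) l'" if "S \<in> binom aF X A" for S
  proof (rule with_order_cong)
    have "S \<subseteq> scarrier X" using that closed_in_subset by (auto simp: binom_iff)
    then show "l x y = l' x y" if "x \<in> scarrier (induced X S)" "y \<in> scarrier (induced X S)" for x y
      using that assms by auto
  qed
  then show ?thesis unfolding order_uniform_def by simp
qed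

lemma order_uniform_mono:
  assumes "T \<subseteq> T'" "T' \<subseteq> scarrier C" and "order_uniform aF (induced C T') l A"
  shows "order_uniform aF (induced C T) l A"
proof -
  have "T \<subseteq> scarrier C" using assms(1,2) by blast
  then show ?thesis
    using assms unfolding order_uniform_def
    by (auto simp: binom_induced_iff induced_induced)
qed

lemma order_uniform_pullback:
  assumes g: "embedding aF g X Y" and u: "order_uniform aF Y l A"
  shows "order_uniform aF X (\<lambda>x y. l (g x) (g y)) A"
  unfolding order_uniform_def
proof (intro ballI)
  fix S S' assume S: "S \<in> binom aF X A" and S': "S' \<in> binom aF X A"
  have image: "isomorphic aF (with_order (induced X T) (\<lambda>x y. l (g x) (g y)))
      (with_order (induced Y (g ` T)) l)" if "T \<in> binom aF X A" for T
  proof -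
    have "T \<subseteq> scarrier X" using that closed_in_subset by (auto simp: binom_iff)
    then show ?thesis by (rule isomorphic_with_order_induced_image[OF g])
  qed
  have "isomorphic aF (with_order (induced Y (g ` S)) l) (with_order (induced Y (g ` S')) l)"
    using u binom_image[OF g S] binom_image[OF g S'] unfolding order_uniform_def by blast
  moreover have "isomorphic aF (with_order (induced Y (g ` S')) l)
      (with_order (induced X S') (\<lambda>x y. l (g x) (g y)))"
    using isomorphic_sym[OF image[OF S']] S' closed_in_induced_carrier by (auto simp: binom_iff)
  ultimately show "isomorphic aF (with_order (induced X S) (\<lambda>x y. l (g x) (g y)))
      (with_order (induced X S') (\<lambda>x y. l (g x) (g y)))"
    using image[OF S] isomorphic_trans by blast
qed

lemma order_uniform_isomorphism:
  assumes g: "isomorphism aF g X Y" and cX: "closed_in aF X (scarrier X)"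
    and u: "order_uniform aF X (\<lambda>x y. l (g x) (g y)) A"
  shows "order_uniform aF Y l A"
proof -
  let ?\<psi> = "inv_into (scarrier X) g"
  have \<psi>: "isomorphism aF ?\<psi> Y X" by (rule isomorphism_inv_into[OF g cX])
  have "order_uniform aF Y (\<lambda>x y. l (g (?\<psi> x)) (g (?\<psi> y))) A"
    using order_uniform_pullback[OF isomorphism_imp_embedding[OF \<psi>] u] .
  moreover have "g (?\<psi> y) = y" if "y \<in> scarrier Y" for y
    using g that by (simp add: isomorphism_def f_inv_into_f)
  ultimately show ?thesis by (subst order_uniform_cong) auto
qed

text \<open>Colour each copy of A by the order it induces on A via a fixed isomorphism; copies of the
  same colour are then order-isomorphic.\<close>

lemma order_type_colouring:
  assumes A: "wf_struc aR aF A" "finite (scarrier A)"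
  shows "\<exists>\<chi>::nat set \<Rightarrow> nat. \<chi> ` binom aF C A \<subseteq> {..<card (Pow (scarrier A \<times> scarrier A))} \<and>
    (\<forall>S\<in>binom aF C A. \<forall>S'\<in>binom aF C A. \<chi> S = \<chi> S' \<longrightarrow>
       isomorphic aF (with_order (induced C S) l) (with_order (induced C S') l))"
proof -
  let ?M = "Pow (scarrier A \<times> scarrier A)"
  obtain idx where idx: "bij_betw idx ?M {..<card ?M}"
    using ex_bij_betw_finite_nat[of ?M] A(2) by (auto simp: atLeast0LessThan)
  define h where "h S = (SOME h. isomorphism aF h A (induced C S))" for S
  define P where "P S = {(x, y). x \<in> scarrier A \<and> y \<in> scarrier A \<and> l (h S x) (h S y)}" for S
  have P: "isomorphic aF (with_order A (\<lambda>x y. (x, y) \<in> P S)) (with_order (induced C S) l)"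
    if "S \<in> binom aF C A" for S
  proof -
    have "isomorphism aF (h S) A (induced C S)"
      using that unfolding binom_iff h_def by (metis someI_ex)
    then show ?thesis
      unfolding isomorphic_def by (auto simp: isomorphism_with_order_iff P_def)
  qed
  have PM: "P S \<in> ?M" for S by (auto simp: P_def)
  show ?thesis
  proof (intro exI[of _ "\<lambda>S. idx (P S)"] conjI ballI impI)
    show "(\<lambda>S. idx (P S)) ` binom aF C A \<subseteq> {..<card ?M}"
      using idx PM by (auto simp: bij_betw_def)
    fix S S' assume S: "S \<in> binom aF C A" and S': "S' \<in> binom aF C A" and "idx (P S) = idx (P S')"
    then have "P S = P S'" using idx PM by (auto simp: bij_betw_def inj_on_def)
    then show "isomorphic aF (with_order (induced C S) l) (with_order (induced C S') l)"
      using P[OF S] P[OF S'] isomorphic_sym isomorphic_trans wf_struc_closed_in_carrier[OF wf_struc_with_order[OF A(1)]]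
      by (metis closed_in_with_order scarrier_with_order)
  qed
qed

definition uniform_order :: "('f \<Rightarrow> nat) \<Rightarrow> ('r, 'f) struc \<Rightarrow> (nat \<Rightarrow> nat \<Rightarrow> bool) \<Rightarrow> bool"
  where "uniform_order aF D l \<longleftrightarrow> strict_linear_order_on (scarrier D) l \<and>
    (\<forall>S S'. closed_in aF D S \<and> closed_in aF D S' \<and> isomorphic aF (induced D S) (induced D S') \<longrightarrow>
       isomorphic aF (with_order (induced D S) l) (with_order (induced D S') l))"

lemma uniform_order_embeddings:
  assumes u: "uniform_order aF D l" and X: "wf_struc aR aF X"
    and e: "embedding aF e X D" and e': "embedding aF e' X D"
  shows "isomorphic aF (with_order X (\<lambda>x y. l (e x) (e y))) (with_order X (\<lambda>x y. l (e' x) (e' y)))"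
proof -
  have image: "isomorphic aF (with_order X (\<lambda>x y. l (f x) (f y))) (with_order (induced D (f ` scarrier X)) l)"
    and copy: "f ` scarrier X \<in> binom aF D X" if "embedding aF f X D" for f
    using isomorphic_with_order_induced_image[OF that subset_refl] image_carrier_in_binom[OF X that]
    by (simp_all add: induced_carrier[OF X])
  have "isomorphic aF (induced D (e ` scarrier X)) (induced D (e' ` scarrier X))"
    using copy[OF e] copy[OF e'] X isomorphic_sym isomorphic_trans wf_struc_closed_in_carrier
    unfolding binom_def by blast
  then have "isomorphic aF (with_order (induced D (e ` scarrier X)) l) (with_order (induced D (e' ` scarrier X)) l)"
    using u copy[OF e] copy[OF e'] unfolding uniform_order_def binom_def by blast
  moreover have "closed_in aF X (scarrier X)" using X by (rule wf_struc_closed_in_carrier)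
  ultimately show ?thesis
    using image[OF e] image[OF e'] isomorphic_trans isomorphic_sym by (metis closed_in_with_order scarrier_with_order)
qed

locale ramsey_fraisse = fraisse +
  assumes ramsey: "ramsey_class aF K"
begin

lemma order_uniform_copy:
  assumes A: "A \<in> K" and Y: "Y \<in> K"
  shows "\<exists>C\<in>K. \<forall>l. \<exists>Y'\<in>binom aF C Y. order_uniform aF (induced C Y') l A"
proof -
  let ?k = "card (Pow (scarrier A \<times> scarrier A)) + 2"
  obtain C where C: "C \<in> K" and mono: "\<And>\<chi>::nat set \<Rightarrow> nat. \<chi> ` binom aF C A \<subseteq> {..<?k} \<Longrightarrow>
      \<exists>Y'\<in>binom aF C Y. \<exists>c. \<forall>S\<in>binom aF (induced C Y') A. \<chi> S = c"
    using ramsey A Y unfolding ramsey_class_def by (metis le_add2)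
  have "\<exists>Y'\<in>binom aF C Y. order_uniform aF (induced C Y') l A" for l
  proof -
    obtain \<chi> :: "nat set \<Rightarrow> nat"
      where \<chi>0: "\<chi> ` binom aF C A \<subseteq> {..<card (Pow (scarrier A \<times> scarrier A))}"
      and same: "\<forall>S\<in>binom aF C A. \<forall>S'\<in>binom aF C A. \<chi> S = \<chi> S' \<longrightarrow>
        isomorphic aF (with_order (induced C S) l) (with_order (induced C S') l)"
      using order_type_colouring[OF wf_struc_member[OF A] finite_member[OF A], of C l] by blast
    have \<chi>: "\<chi> ` binom aF C A \<subseteq> {..<?k}"
      using \<chi>0 by (meson lessThan_subset_iff le_add1 subset_trans)
    obtain Y' c where Y': "Y' \<in> binom aF C Y" and c: "\<And>S. S \<in> binom aF (induced C Y') A \<Longrightarrow> \<chi> S = c"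
      using mono[OF \<chi>] by blast
    have Y'C: "Y' \<subseteq> scarrier C" using Y' closed_in_subset by (auto simp: binom_iff)
    have "order_uniform aF (induced C Y') l A"
      unfolding order_uniform_def
      using c same Y'C by (simp add: binom_induced_iff induced_induced)
    then show ?thesis using Y' by blast
  qed
  then show ?thesis using C by blast
qed

lemma order_uniform_copy_finite:
  assumes "finite \<A>"
  shows "\<A> \<subseteq> K \<Longrightarrow> B \<in> K \<Longrightarrow> \<exists>C\<in>K. \<forall>l. \<exists>B'\<in>binom aF C B. \<forall>A\<in>\<A>. order_uniform aF (induced C B') l A"
  using assms
proof (induction \<A> arbitrary: B rule: finite_induct)
  case empty
  then show ?case using binom_carrier wf_struc_member by blast
next
  case (insert A \<A>)
  obtain C1 where C1: "C1 \<in> K"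
    and IH: "\<And>l. \<exists>B1\<in>binom aF C1 B. \<forall>A'\<in>\<A>. order_uniform aF (induced C1 B1) l A'"
    using insert by blast
  obtain C where C: "C \<in> K"
    and new: "\<And>l. \<exists>C1'\<in>binom aF C C1. order_uniform aF (induced C C1') l A"
    using order_uniform_copy insert.prems C1 by blast
  have "\<exists>B'\<in>binom aF C B. \<forall>A'\<in>insert A \<A>. order_uniform aF (induced C B') l A'" for l
  proof -
    obtain C1' where C1': "C1' \<in> binom aF C C1" and uA: "order_uniform aF (induced C C1') l A"
      using new by blast
    obtain g where g: "isomorphism aF g C1 (induced C C1')" using C1' by (auto simp: binom_iff)
    have C1'C: "C1' \<subseteq> scarrier C" using C1' closed_in_subset by (auto simp: binom_iff)
    have eg: "embedding aF g C1 C" using isomorphism_onto_induced_imp_embedding[OF g C1'C] .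
    obtain B1 where B1: "B1 \<in> binom aF C1 B"
      and u1: "\<forall>A'\<in>\<A>. order_uniform aF (induced C1 B1) (\<lambda>x y. l (g x) (g y)) A'"
      using IH by blast
    have B1C1: "B1 \<subseteq> scarrier C1" using B1 closed_in_subset by (auto simp: binom_iff)
    have "g ` B1 \<subseteq> C1'" using g B1C1 by (auto simp: isomorphism_def)
    then have "order_uniform aF (induced C (g ` B1)) l A"
      using order_uniform_mono[OF _ C1'C uA] by blast
    moreover have "closed_in aF (induced C1 B1) (scarrier (induced C1 B1))"
      using B1 closed_in_induced_carrier[of aF C1 B1] by (simp add: binom_iff)
    then have "order_uniform aF (induced C (g ` B1)) l A'" if "A' \<in> \<A>" for A'
      using order_uniform_isomorphism[OF isomorphism_induced_image[OF eg B1C1]] u1 that by blast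
    ultimately show ?thesis using binom_image[OF eg B1] by blast
  qed
  then show ?case using C by blast
qed

text \<open>Ordering a copy of B inside a large C by the natural order of the (numeric) universe
  yields, via the Ramsey property, a copy on which all copies of every substructure of B are
  ordered alike.\<close>

lemma uniform_order_exists:
  assumes B: "B \<in> K"
  shows "\<exists>l. uniform_order aF B l"
proof -
  let ?\<A> = "induced B ` {S. closed_in aF B S}"
  have "{S. closed_in aF B S} \<subseteq> Pow (scarrier B)" using closed_in_subset by blast
  then have "finite ?\<A>" using finite_member[OF B] by (auto intro: finite_subset)
  moreover have "?\<A> \<subseteq> K" using induced_member[OF B] by blast
  ultimately obtain C where "\<forall>l. \<exists>B'\<in>binom aF C B. \<forall>A\<in>?\<A>. order_uniform aF (induced C B') l A"
    using order_uniform_copy_finite[of ?\<A> B] B by meson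
  then obtain B' where B': "B' \<in> binom aF C B" and u: "\<forall>A\<in>?\<A>. order_uniform aF (induced C B') (<) A"
    by blast
  obtain g where g: "isomorphism aF g B (induced C B')" using B' by (auto simp: binom_iff)
  have eg: "embedding aF g B (induced C B')" using g by (rule isomorphism_imp_embedding)
  have "strict_linear_order_on (scarrier B) (\<lambda>x y. g x < g y)"
    using strict_linear_order_on_pullback[OF strict_linear_order_on_less] eg
    by (auto simp: embedding_def)
  moreover have "isomorphic aF (with_order (induced B S) (\<lambda>x y. g x < g y))
      (with_order (induced B S') (\<lambda>x y. g x < g y))"
    if S: "closed_in aF B S" "closed_in aF B S'" "isomorphic aF (induced B S) (induced B S')" for S S'
  proof -
    have "order_uniform aF B (\<lambda>x y. g x < g y) (induced B S)"
      using order_uniform_pullback[OF eg] u S(1) by blast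
    moreover have "S \<in> binom aF B (induced B S)" "S' \<in> binom aF B (induced B S)"
      using S isomorphic_refl by (auto simp: binom_def)
    ultimately show ?thesis unfolding order_uniform_def by blast
  qed
  ultimately show ?thesis unfolding uniform_order_def by blast
qed

end

section \<open>Coherent choices of order types\<close>

text \<open>A choice \<tau> gives every structure X an order on its universe, encoded as a set of pairs;
  on K it is meant to fix one order type per isomorphism type.\<close>

definition chosen_expansion ::
    "(('r, 'f) struc \<Rightarrow> (nat \<times> nat) set) \<Rightarrow> ('r, 'f) struc \<Rightarrow> ('r option, 'f) struc"
  where "chosen_expansion \<tau> X = with_order X (\<lambda>x y. (x, y) \<in> \<tau> X)"

definition coherent_order :: "('f \<Rightarrow> nat) \<Rightarrow> (('r, 'f) struc \<Rightarrow> (nat \<times> nat) set) \<Rightarrow>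
    ('r, 'f) struc \<Rightarrow> (nat \<Rightarrow> nat \<Rightarrow> bool) \<Rightarrow> bool"
  where "coherent_order aF \<tau> B l \<longleftrightarrow> strict_linear_order_on (scarrier B) l \<and>
    (\<forall>S. closed_in aF B S \<longrightarrow>
       isomorphic aF (with_order (induced B S) l) (chosen_expansion \<tau> (induced B S)))"

definition coherent_choice ::
    "('f \<Rightarrow> nat) \<Rightarrow> ('r, 'f) struc set \<Rightarrow> (('r, 'f) struc \<Rightarrow> (nat \<times> nat) set) \<Rightarrow> bool"
  where "coherent_choice aF K \<tau> \<longleftrightarrow> (\<forall>B\<in>K. \<exists>l. coherent_order aF \<tau> B l) \<and>
    (\<forall>X\<in>K. \<forall>Y\<in>K. isomorphic aF X Y \<longrightarrow>
       isomorphic aF (chosen_expansion \<tau> X) (chosen_expansion \<tau> Y))"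

lemma coherent_order_cong:
  assumes "\<And>x y. x \<in> scarrier B \<Longrightarrow> y \<in> scarrier B \<Longrightarrow> l x y = l' x y"
  shows "coherent_order aF \<tau> B l \<longleftrightarrow> coherent_order aF \<tau> B l'"
proof -
  have "with_order (induced B S) l = with_order (induced B S) l'" if "closed_in aF B S" for S
    using closed_in_subset[OF that] assms by (intro with_order_cong) auto
  moreover have "strict_linear_order_on (scarrier B) l \<longleftrightarrow> strict_linear_order_on (scarrier B) l'"
    using assms by (rule strict_linear_order_on_cong)
  ultimately show ?thesis unfolding coherent_order_def by auto
qed

lemma coherent_order_cong_choice:
  assumes "\<And>S. S \<subseteq> scarrier B \<Longrightarrow> \<tau> (induced B S) = \<tau>' (induced B S)"
  shows "coherent_order aF \<tau> B = coherent_order aF \<tau>' B"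
proof -
  have "\<tau> (induced B S) = \<tau>' (induced B S)" if "closed_in aF B S" for S
    using assms closed_in_subset[OF that] .
  then show ?thesis unfolding coherent_order_def chosen_expansion_def by (intro ext) auto
qed

context ramsey_fraisse
begin

text \<open>Finitely many structures can be treated at once: order each by pulling back a uniform
  order of a common extension D along a fixed embedding into D.\<close>

lemma coherent_choice_finite:
  assumes "finite M" "M \<subseteq> K"
  shows "\<exists>\<tau>. (\<forall>X. X \<notin> K \<longrightarrow> \<tau> X = {}) \<and> (\<forall>X. \<tau> X \<subseteq> scarrier X \<times> scarrier X) \<and>
    (\<forall>X\<in>M. (\<exists>l. coherent_order aF \<tau> X l) \<and> (\<forall>Y\<in>M. isomorphic aF X Y \<longrightarrow>
       isomorphic aF (chosen_expansion \<tau> X) (chosen_expansion \<tau> Y)))"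
proof -
  obtain D where D: "D \<in> K" and emb: "\<And>X. X \<in> M \<Longrightarrow> \<exists>e. embedding aF e X D"
    using joint_embedding_finite[OF assms] by blast
  obtain ld where u: "uniform_order aF D ld" using uniform_order_exists[OF D] by blast
  define e where "e X = (SOME e. embedding aF e X D)" for X
  define \<tau> where "\<tau> X = (if X \<in> K \<and> (\<exists>e. embedding aF e X D)
      then {(x, y). x \<in> scarrier X \<and> y \<in> scarrier X \<and> ld (e X x) (e X y)} else {})" for X
  have e: "embedding aF (e X) X D" if "\<exists>e. embedding aF e X D" for X
    unfolding e_def using that by (rule someI_ex)
  have chosen: "chosen_expansion \<tau> X = with_order X (\<lambda>x y. ld (e X x) (e X y))"
    if "X \<in> K" "\<exists>e. embedding aF e X D" for X
    unfolding chosen_expansion_def \<tau>_def using that by (auto intro!: with_order_cong)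
  have coherent: "coherent_order aF \<tau> X (\<lambda>x y. ld (e X x) (e X y))" if X: "X \<in> M" for X
    unfolding coherent_order_def
  proof (intro conjI allI impI)
    have eX: "embedding aF (e X) X D" using e emb X by blast
    then show "strict_linear_order_on (scarrier X) (\<lambda>x y. ld (e X x) (e X y))"
      using strict_linear_order_on_pullback u by (auto simp: uniform_order_def embedding_def)
    fix S assume S: "closed_in aF X S"
    have XS: "induced X S \<in> K" using induced_member S X assms(2) by blast
    have "embedding aF (e X) (induced X S) D" using embedding_restrict[OF eX closed_in_subset[OF S]] .
    then show "isomorphic aF (with_order (induced X S) (\<lambda>x y. ld (e X x) (e X y)))
        (chosen_expansion \<tau> (induced X S))"
      using uniform_order_embeddings[OF u wf_struc_member[OF XS]] e chosen XS by metis
  qed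
  have iso: "isomorphic aF (chosen_expansion \<tau> X) (chosen_expansion \<tau> Y)"
    if X: "X \<in> M" and Y: "Y \<in> M" and XY: "isomorphic aF X Y" for X Y
  proof -
    obtain h where h: "isomorphism aF h X Y" using XY by (auto simp: isomorphic_def)
    have eX: "embedding aF (e X) X D" and eY: "embedding aF (e Y) Y D" using e emb X Y by blast+
    have "isomorphic aF (with_order X (\<lambda>x y. ld (e X x) (e X y)))
        (with_order X (\<lambda>x y. ld ((e Y \<circ> h) x) ((e Y \<circ> h) y)))"
      using uniform_order_embeddings[OF u _ eX embedding_comp[OF isomorphism_imp_embedding[OF h] eY]]
        wf_struc_member X assms(2) by blast
    moreover have "isomorphism aF h (with_order X (\<lambda>x y. ld ((e Y \<circ> h) x) ((e Y \<circ> h) y)))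
        (with_order Y (\<lambda>x y. ld (e Y x) (e Y y)))"
      using h by (simp add: isomorphism_with_order_iff)
    ultimately have "isomorphic aF (with_order X (\<lambda>x y. ld (e X x) (e X y)))
        (with_order Y (\<lambda>x y. ld (e Y x) (e Y y)))"
      using isomorphic_trans unfolding isomorphic_def by blast
    moreover have "X \<in> K" "Y \<in> K" using X Y assms(2) by auto
    ultimately show ?thesis using chosen emb X Y by simp
  qed
  have "\<tau> X \<subseteq> scarrier X \<times> scarrier X" "X \<notin> K \<longrightarrow> \<tau> X = {}" for X
    by (auto simp: \<tau>_def)
  then show ?thesis using coherent iso by (intro exI[of _ \<tau>]) blast
qed

lemma coherent_choice_exists: "\<exists>\<tau>. coherent_choice aF K \<tau>"
proof -
  \<comment> \<open>Off K the choice is pinned to {}, so that every coordinate ranges over a finite set; the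
    pair (X, X) demands a coherent order on X.\<close>
  define F where "F X = (if X \<in> K then Pow (scarrier X \<times> scarrier X) else {{}})" for X
  define con where "con XY \<tau> \<longleftrightarrow> fst XY \<in> K \<and> (\<exists>l. coherent_order aF \<tau> (fst XY) l) \<and>
      isomorphic aF (chosen_expansion \<tau> (fst XY)) (chosen_expansion \<tau> (snd XY))" for XY \<tau>
  define I where "I = {(X, Y). X \<in> K \<and> Y \<in> K \<and> isomorphic aF X Y}"
  have "\<exists>\<tau>. (\<forall>X. \<tau> X \<in> F X) \<and> (\<forall>c\<in>con ` I. c \<tau>)"
  proof (rule finitely_satisfiable_imp_satisfiable)
    show "finite (F X)" for X using finite_member by (simp add: F_def)
  next
    fix c assume "c \<in> con ` I"
    then obtain X Y where c: "c = con (X, Y)" and X: "X \<in> K" by (auto simp: I_def)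
    let ?s = "insert Y (induced X ` Pow (scarrier X))"
    have "c \<tau> = c \<tau>'" if "\<forall>Z\<in>?s. \<tau> Z = \<tau>' Z" for \<tau> \<tau>'
    proof -
      have "\<tau> X = \<tau>' X" "\<tau> Y = \<tau>' Y"
        using that induced_carrier[OF wf_struc_member[OF X]] by (metis Pow_top imageI insertI2, simp)
      moreover have "coherent_order aF \<tau> X = coherent_order aF \<tau>' X"
        using that by (intro coherent_order_cong_choice) simp
      ultimately show ?thesis unfolding c con_def chosen_expansion_def by simp
    qed
    moreover have "finite ?s" using finite_member[OF X] by simp
    ultimately show "\<exists>s. finite s \<and> (\<forall>\<tau> \<tau>'. (\<forall>Z\<in>s. \<tau> Z = \<tau>' Z) \<longrightarrow> c \<tau> = c \<tau>')" by blast
  next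
    fix \<Gamma> assume "\<Gamma> \<subseteq> con ` I" "finite \<Gamma>"
    then obtain J where J: "J \<subseteq> I" "finite J" "\<Gamma> = con ` J" by (meson finite_subset_image)
    have fin: "finite (fst ` J \<union> snd ` J)" and sub: "fst ` J \<union> snd ` J \<subseteq> K"
      using J by (auto simp: I_def)
    obtain \<tau> where \<tau>: "\<forall>X. X \<notin> K \<longrightarrow> \<tau> X = {}" "\<forall>X. \<tau> X \<subseteq> scarrier X \<times> scarrier X"
      and coh: "\<forall>X\<in>fst ` J \<union> snd ` J. (\<exists>l. coherent_order aF \<tau> X l) \<and> (\<forall>Y\<in>fst ` J \<union> snd ` J.
        isomorphic aF X Y \<longrightarrow> isomorphic aF (chosen_expansion \<tau> X) (chosen_expansion \<tau> Y))"
      using coherent_choice_finite[OF fin sub] by blast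
    have "c \<tau>" if c: "c \<in> \<Gamma>" for c
    proof -
      obtain X Y where XY: "(X, Y) \<in> J" "c = con (X, Y)" using c J(3) by auto
      then have "X \<in> fst ` J \<union> snd ` J" "Y \<in> fst ` J \<union> snd ` J" "X \<in> K" "isomorphic aF X Y"
        using J(1) by (force simp: I_def)+
      then show "c \<tau>" using coh XY(2) by (simp add: con_def)
    qed
    moreover have "\<forall>X. \<tau> X \<in> F X" using \<tau> by (auto simp: F_def)
    ultimately show "\<exists>\<tau>. (\<forall>X. \<tau> X \<in> F X) \<and> (\<forall>c\<in>\<Gamma>. c \<tau>)" by blast
  qed
  then obtain \<tau> where \<tau>: "\<And>XY. XY \<in> I \<Longrightarrow> con XY \<tau>" by blast
  have "\<exists>l. coherent_order aF \<tau> B l" if "B \<in> K" for B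
    using \<tau>[of "(B, B)"] that isomorphic_refl[of aF B] by (simp add: I_def con_def)
  moreover have "isomorphic aF (chosen_expansion \<tau> X) (chosen_expansion \<tau> Y)"
    if "X \<in> K" "Y \<in> K" "isomorphic aF X Y" for X Y
    using \<tau>[of "(X, Y)"] that by (simp add: I_def con_def)
  ultimately have "coherent_choice aF K \<tau>" by (simp add: coherent_choice_def)
  then show ?thesis by blast
qed

end

lemma coherent_order_linear: "coherent_order aF \<tau> B l \<Longrightarrow> strict_linear_order_on (scarrier B) l"
  by (simp add: coherent_order_def)

lemma coherent_order_isomorphic_chosen:
  assumes B: "wf_struc aR aF B" and l: "coherent_order aF \<tau> B l"
  shows "isomorphic aF (with_order B l) (chosen_expansion \<tau> B)"
  using l wf_struc_closed_in_carrier[OF B] induced_carrier[OF B]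
  unfolding coherent_order_def by metis

lemma coherent_orders_isomorphic:
  assumes B: "wf_struc aR aF B" and "coherent_order aF \<tau> B l" "coherent_order aF \<tau> B l'"
  shows "isomorphic aF (with_order B l) (with_order B l')"
  using assms coherent_order_isomorphic_chosen isomorphic_sym isomorphic_trans
    wf_struc_closed_in_carrier[OF B] by (metis closed_in_with_order scarrier_with_order)

section \<open>The ordered class\<close>

definition coherent_expansions ::
    "('f \<Rightarrow> nat) \<Rightarrow> ('r, 'f) struc set \<Rightarrow> (('r, 'f) struc \<Rightarrow> (nat \<times> nat) set) \<Rightarrow> ('r option, 'f) struc set"
  where "coherent_expansions aF K \<tau> = {with_order A l | A l. A \<in> K \<and> coherent_order aF \<tau> A l}"

locale coherent_expansion = fraisse +
  fixes \<tau> :: "('r, 'f) struc \<Rightarrow> (nat \<times> nat) set"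
  assumes coherent: "coherent_choice aF K \<tau>"
begin

abbreviation "Kstar \<equiv> coherent_expansions aF K \<tau>"

lemma coherent_order_exists: "B \<in> K \<Longrightarrow> \<exists>l. coherent_order aF \<tau> B l"
  using coherent by (simp add: coherent_choice_def)

lemma chosen_expansion_isomorphic:
  "X \<in> K \<Longrightarrow> Y \<in> K \<Longrightarrow> isomorphic aF X Y \<Longrightarrow>
   isomorphic aF (chosen_expansion \<tau> X) (chosen_expansion \<tau> Y)"
  using coherent by (simp add: coherent_choice_def)

lemma with_order_in_Kstar_iff: "with_order A l \<in> Kstar \<longleftrightarrow> A \<in> K \<and> coherent_order aF \<tau> A l"
proof
  assume "with_order A l \<in> Kstar"
  then obtain A' l' where eq: "with_order A l = with_order A' l'" and A': "A' \<in> K" "coherent_order aF \<tau> A' l'"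
    by (auto simp: coherent_expansions_def)
  then have A: "A' = A" by (metis reduct_with_order)
  have "l x y = l' x y" if "x \<in> scarrier A" "y \<in> scarrier A" for x y
    using arg_cong[OF eq, of "\<lambda>W. srels W None [x, y]"] that A by simp
  then show "A \<in> K \<and> coherent_order aF \<tau> A l"
    using A' A coherent_order_cong by metis
qed (auto simp: coherent_expansions_def)

lemma Kstar_cases:
  assumes "W \<in> Kstar"
  obtains A l where "W = with_order A l" "A \<in> K" "coherent_order aF \<tau> A l"
  using assms by (auto simp: coherent_expansions_def)

lemma coherent_order_pullback:
  assumes X: "X \<in> K" and E: "E \<in> K" and b: "embedding aF b X E"
    and lE: "coherent_order aF \<tau> E l"
  shows "coherent_order aF \<tau> X (\<lambda>x y. l (b x) (b y))"
  unfolding coherent_order_def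
proof (intro conjI allI impI)
  show "strict_linear_order_on (scarrier X) (\<lambda>x y. l (b x) (b y))"
    using strict_linear_order_on_pullback coherent_order_linear[OF lE] b
    by (auto simp: embedding_def)
  fix S assume S: "closed_in aF X S"
  have bS: "closed_in aF E (b ` S)" using closed_in_image[OF b S] .
  have "isomorphic aF (induced X S) (induced E (b ` S))"
    using isomorphism_induced_image[OF b closed_in_subset[OF S]] by (auto simp: isomorphic_def)
  then have "isomorphic aF (chosen_expansion \<tau> (induced E (b ` S))) (chosen_expansion \<tau> (induced X S))"
    using chosen_expansion_isomorphic induced_member X E S bS isomorphic_sym closed_in_induced_carrier
    unfolding chosen_expansion_def by (metis closed_in_with_order scarrier_with_order scarrier_induced)
  moreover have "isomorphic aF (with_order (induced E (b ` S)) l) (chosen_expansion \<tau> (induced E (b ` S)))"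
    using lE bS by (simp add: coherent_order_def)
  ultimately show "isomorphic aF (with_order (induced X S) (\<lambda>x y. l (b x) (b y)))
      (chosen_expansion \<tau> (induced X S))"
    using isomorphic_with_order_induced_image[OF b closed_in_subset[OF S]] isomorphic_trans by blast
qed

text \<open>Since all coherent orders on X are isomorphic, any embedding of X into a coherently
  ordered E can be precomposed with an automorphism of X so as to preserve a given coherent order.\<close>

lemma embedding_adjust_to_order:
  assumes X: "X \<in> K" and E: "E \<in> K" and b: "embedding aF b X E"
    and lE: "coherent_order aF \<tau> E l" and lX: "coherent_order aF \<tau> X l'"
  obtains b' where "embedding aF b' X E" "b' ` scarrier X = b ` scarrier X"
    "\<forall>x\<in>scarrier X. \<forall>y\<in>scarrier X. l (b' x) (b' y) = l' x y"
proof -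
  obtain \<beta> where "isomorphism aF \<beta> (with_order X l') (with_order X (\<lambda>x y. l (b x) (b y)))"
    using coherent_orders_isomorphic[OF wf_struc_member[OF X] lX coherent_order_pullback[OF X E b lE]]
    by (auto simp: isomorphic_def)
  then have \<beta>: "isomorphism aF \<beta> X X" "\<forall>x\<in>scarrier X. \<forall>y\<in>scarrier X. l (b (\<beta> x)) (b (\<beta> y)) = l' x y"
    by (simp_all add: isomorphism_with_order_iff)
  have "embedding aF (b \<circ> \<beta>) X E" using embedding_comp[OF isomorphism_imp_embedding[OF \<beta>(1)] b] .
  moreover have "(b \<circ> \<beta>) ` scarrier X = b ` scarrier X"
    using \<beta>(1) by (metis image_comp isomorphism_def)
  ultimately show ?thesis using that \<beta>(2) by simp
qed

end

context coherent_expansion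
begin

lemma reduct_Kstar: "reduct ` Kstar = K"
proof
  show "reduct ` Kstar \<subseteq> K" by (auto simp: coherent_expansions_def)
  show "K \<subseteq> reduct ` Kstar"
  proof
    fix A assume A: "A \<in> K"
    then obtain l where "coherent_order aF \<tau> A l" using coherent_order_exists by blast
    then have "with_order A l \<in> Kstar" using A by (simp add: with_order_in_Kstar_iff)
    then show "A \<in> reduct ` Kstar" by (metis image_eqI reduct_with_order)
  qed
qed

lemma ordered_class_Kstar: "ordered_class Kstar"
  unfolding ordered_class_def
proof
  fix W assume "W \<in> Kstar"
  then obtain A l where W: "W = with_order A l" and l: "coherent_order aF \<tau> A l"
    by (rule Kstar_cases)
  have "strict_linear_order_on (scarrier A) (\<lambda>x y. srels W None [x, y])
      \<longleftrightarrow> strict_linear_order_on (scarrier A) l"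
    by (rule strict_linear_order_on_cong) (simp add: W)
  then show "strict_linear_order_on (scarrier W) (\<lambda>x y. srels W None [x, y])"
    using coherent_order_linear[OF l] W by simp
qed

lemma class_of_finite_Kstar: "class_of_finite (ord_arity aR) aF Kstar"
  unfolding class_of_finite_def
proof
  fix W assume "W \<in> Kstar"
  then obtain A l where "W = with_order A l" "A \<in> K" by (rule Kstar_cases)
  then show "wf_struc (ord_arity aR) aF W \<and> finite (scarrier W)"
    using wf_struc_with_order[OF wf_struc_member] finite_member by simp
qed

lemma hereditary_Kstar: "hereditary (ord_arity aR) aF Kstar"
  unfolding hereditary_def
proof (intro ballI allI impI)
  fix W B h assume W: "W \<in> Kstar"
    and B: "wf_struc (ord_arity aR) aF B \<and> finite (scarrier B) \<and> embedding aF h B W"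
  obtain A l where WA: "W = with_order A l" and A: "A \<in> K" and l: "coherent_order aF \<tau> A l"
    using W by (rule Kstar_cases)
  let ?lB = "\<lambda>x y. srels B None [x, y]"
  have B_eq: "B = with_order (reduct B) ?lB"
    using with_order_reduct B by metis
  then have h: "embedding aF h (with_order (reduct B) ?lB) (with_order A l)"
    using B WA by simp
  then have hB: "embedding aF h (reduct B) A"
    by (simp add: embedding_with_order_iff)
  have "reduct B \<in> K"
    using fraisse A wf_struc_reduct B hB unfolding fraisse_class_def hereditary_def by fastforce
  moreover have "coherent_order aF \<tau> (reduct B) ?lB"
  proof (subst coherent_order_cong)
    show "?lB x y = l (h x) (h y)" if "x \<in> scarrier (reduct B)" "y \<in> scarrier (reduct B)" for x y
      using h that by (auto simp: embedding_with_order_iff)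
  qed (rule coherent_order_pullback[OF \<open>reduct B \<in> K\<close> A hB l])
  ultimately show "B \<in> Kstar" using B_eq with_order_in_Kstar_iff by metis
qed

lemma joint_embedding_Kstar: "joint_embedding aF Kstar"
  unfolding joint_embedding_def
proof (intro ballI)
  fix W1 W2 assume "W1 \<in> Kstar" "W2 \<in> Kstar"
  then obtain A1 l1 A2 l2 where W: "W1 = with_order A1 l1" "W2 = with_order A2 l2"
    and A: "A1 \<in> K" "A2 \<in> K" and l: "coherent_order aF \<tau> A1 l1" "coherent_order aF \<tau> A2 l2"
    by (metis Kstar_cases)
  obtain D f g where D: "D \<in> K" and f: "embedding aF f A1 D" and g: "embedding aF g A2 D"
    using joint_embedding[OF A] by blast
  obtain lD where lD: "coherent_order aF \<tau> D lD" using coherent_order_exists[OF D] by blast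
  obtain f' where "embedding aF f' A1 D" "f' ` scarrier A1 = f ` scarrier A1"
      "\<forall>x\<in>scarrier A1. \<forall>y\<in>scarrier A1. lD (f' x) (f' y) = l1 x y"
    by (rule embedding_adjust_to_order[OF A(1) D f lD l(1)])
  then have "embedding aF f' W1 (with_order D lD)" by (simp add: W embedding_with_order_iff)
  moreover obtain g' where "embedding aF g' A2 D" "g' ` scarrier A2 = g ` scarrier A2"
      "\<forall>x\<in>scarrier A2. \<forall>y\<in>scarrier A2. lD (g' x) (g' y) = l2 x y"
    by (rule embedding_adjust_to_order[OF A(2) D g lD l(2)])
  then have "embedding aF g' W2 (with_order D lD)" by (simp add: W embedding_with_order_iff)
  moreover have "with_order D lD \<in> Kstar" using D lD by (simp add: with_order_in_Kstar_iff)
  ultimately show "\<exists>C\<in>Kstar. (\<exists>f. embedding aF f W1 C) \<and> (\<exists>g. embedding aF g W2 C)" by blast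
qed

lemma arbitrarily_large_Kstar: "arbitrarily_large Kstar"
  unfolding arbitrarily_large_def
proof
  fix n
  obtain A where A: "A \<in> K" "n \<le> card (scarrier A)"
    using fraisse unfolding fraisse_class_def arbitrarily_large_def by blast
  obtain l where "coherent_order aF \<tau> A l" using coherent_order_exists[OF A(1)] by blast
  then have "with_order A l \<in> Kstar" using A by (simp add: with_order_in_Kstar_iff)
  then show "\<exists>W\<in>Kstar. n \<le> card (scarrier W)" using A(2) by (intro bexI) simp_all
qed

lemma forgetful_Kstar: "forgetful aF Kstar"
  unfolding forgetful_def reduct_Kstar admissible_def
proof (intro ballI allI impI)
  fix A B lA lB
  assume A: "A \<in> K" and B: "B \<in> K"
    and AB: "isomorphic aF A B \<and> with_order A lA \<in> Kstar \<and> with_order B lB \<in> Kstar"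
  then have lA: "coherent_order aF \<tau> A lA" and lB: "coherent_order aF \<tau> B lB"
    by (simp_all add: with_order_in_Kstar_iff)
  have "isomorphic aF (with_order A lA) (chosen_expansion \<tau> A)"
    using coherent_order_isomorphic_chosen[OF wf_struc_member[OF A] lA] .
  also have "isomorphic aF (chosen_expansion \<tau> A) (chosen_expansion \<tau> B)"
    using chosen_expansion_isomorphic A B AB by blast
  also have "isomorphic aF (chosen_expansion \<tau> B) (with_order B lB)"
    using isomorphic_sym[OF coherent_order_isomorphic_chosen[OF wf_struc_member[OF B] lB]]
      closed_in_carrier_member[OF B] by simp
  finally show "isomorphic aF (with_order A lA) (with_order B lB)" .
qed

end

context coherent_expansion
begin

lemma order_preserving_embedding_into_copy:
  assumes A: "A \<in> K" and Z: "Z \<in> K" and E: "E \<in> K"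
    and lZ: "coherent_order aF \<tau> Z lZ" and lE: "coherent_order aF \<tau> E lE"
    and e: "embedding aF e Z E" and eT: "e ` scarrier Z \<subseteq> T" and h: "embedding aF h A Z"
  obtains z where "embedding aF z Z E" "\<forall>x\<in>scarrier Z. \<forall>y\<in>scarrier Z. lE (z x) (z y) = lZ x y"
    "z ` h ` scarrier A \<in> binom aF (induced E T) A"
proof -
  obtain z where z: "embedding aF z Z E" "z ` scarrier Z = e ` scarrier Z"
    "\<forall>x\<in>scarrier Z. \<forall>y\<in>scarrier Z. lE (z x) (z y) = lZ x y"
    by (rule embedding_adjust_to_order[OF Z E e lE lZ])
  have "embedding aF z Z (induced E T)" using embedding_into_induced[OF z(1)] z(2) eT by simp
  then have "z ` h ` scarrier A \<in> binom aF (induced E T) A"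
    using binom_image image_carrier_in_binom[OF wf_struc_member[OF A] h] by blast
  then show ?thesis using that z by blast
qed

text \<open>Embed B and C order-preservingly into a Ramsey witness E for copies of A in a joint
  extension D. Colour a copy of A by whether it is the image of f(A) under some order-preserving
  embedding of B; a monochromatic copy of D contains such an image, hence so is the image of g(A).\<close>

lemma order_preserving_embeddings_common_image:
  assumes ramsey: "ramsey_class aF K" and K: "A \<in> K" "B \<in> K" "C \<in> K"
    and lb: "coherent_order aF \<tau> B lb" and lc: "coherent_order aF \<tau> C lc"
    and f: "embedding aF f A B" and g: "embedding aF g A C"
  obtains E lE b c where "E \<in> K" "coherent_order aF \<tau> E lE"
    "embedding aF b B E" "\<forall>x\<in>scarrier B. \<forall>y\<in>scarrier B. lE (b x) (b y) = lb x y"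
    "embedding aF c C E" "\<forall>x\<in>scarrier C. \<forall>y\<in>scarrier C. lE (c x) (c y) = lc x y"
    "b ` f ` scarrier A = c ` g ` scarrier A"
proof -
  obtain D b0 c0 where D: "D \<in> K" and b0: "embedding aF b0 B D" and c0: "embedding aF c0 C D"
    using joint_embedding[OF K(2,3)] by blast
  obtain E where E: "E \<in> K" and mono: "\<And>\<chi>::nat set \<Rightarrow> nat. \<chi> ` binom aF E A \<subseteq> {..<2} \<Longrightarrow>
      \<exists>D'\<in>binom aF E D. \<exists>c. \<forall>S\<in>binom aF (induced E D') A. \<chi> S = c"
    using ramsey K(1) D unfolding ramsey_class_def by (metis order_refl)
  obtain lE where lE: "coherent_order aF \<tau> E lE" using coherent_order_exists[OF E] by blast
  define realized where "realized S \<longleftrightarrow> (\<exists>b. embedding aF b B E \<and>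
      (\<forall>x\<in>scarrier B. \<forall>y\<in>scarrier B. lE (b x) (b y) = lb x y) \<and> b ` f ` scarrier A = S)" for S
  define \<chi> where "\<chi> S = (if realized S then 1 else 0 :: nat)" for S
  obtain D' c where D': "D' \<in> binom aF E D" and c: "\<And>S. S \<in> binom aF (induced E D') A \<Longrightarrow> \<chi> S = c"
    using mono[of \<chi>] by (force simp: \<chi>_def)
  obtain d where d: "isomorphism aF d D (induced E D')" using D' by (auto simp: binom_iff)
  have D'E: "D' \<subseteq> scarrier E" using D' closed_in_subset by (auto simp: binom_iff)
  have ed: "embedding aF d D E" using isomorphism_onto_induced_imp_embedding[OF d D'E] .
  have into_D': "(d \<circ> e) ` scarrier Z \<subseteq> D'" if "embedding aF e Z D" for e Z
    using d that by (auto simp: isomorphism_def embedding_def)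
  obtain b1 where "embedding aF b1 B E" "\<forall>x\<in>scarrier B. \<forall>y\<in>scarrier B. lE (b1 x) (b1 y) = lb x y"
    "b1 ` f ` scarrier A \<in> binom aF (induced E D') A"
    by (rule order_preserving_embedding_into_copy[OF K(1,2) E lb lE embedding_comp[OF b0 ed] into_D'[OF b0] f])
  then have "c = 1" using c by (force simp: \<chi>_def realized_def)
  obtain cc where cc: "embedding aF cc C E" "\<forall>x\<in>scarrier C. \<forall>y\<in>scarrier C. lE (cc x) (cc y) = lc x y"
    "cc ` g ` scarrier A \<in> binom aF (induced E D') A"
    by (rule order_preserving_embedding_into_copy[OF K(1,3) E lc lE embedding_comp[OF c0 ed] into_D'[OF c0] g])
  then have "realized (cc ` g ` scarrier A)" using c \<open>c = 1\<close> by (metis \<chi>_def zero_neq_one)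
  then obtain b where "embedding aF b B E" "\<forall>x\<in>scarrier B. \<forall>y\<in>scarrier B. lE (b x) (b y) = lb x y"
    "b ` f ` scarrier A = cc ` g ` scarrier A"
    unfolding realized_def by blast
  then show ?thesis using that[OF E lE _ _ cc(1,2)] by blast
qed

text \<open>The two embeddings of A obtained above have the same image and both preserve its order,
  so they agree, finite linear orders being rigid.\<close>

lemma amalgamation_Kstar:
  assumes ramsey: "ramsey_class aF K"
  shows "amalgamation aF Kstar"
  unfolding amalgamation_def
proof (intro ballI allI impI)
  fix A' B' C' f g
  assume "A' \<in> Kstar" "B' \<in> Kstar" "C' \<in> Kstar" and fg: "embedding aF f A' B' \<and> embedding aF g A' C'"
  then obtain A la B lb C lc where W: "A' = with_order A la" "B' = with_order B lb" "C' = with_order C lc"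
    and K: "A \<in> K" "B \<in> K" "C \<in> K"
    and l: "coherent_order aF \<tau> A la" "coherent_order aF \<tau> B lb" "coherent_order aF \<tau> C lc"
    by (metis Kstar_cases)
  have f: "embedding aF f A B" and fo: "\<forall>x\<in>scarrier A. \<forall>y\<in>scarrier A. lb (f x) (f y) = la x y"
    and g: "embedding aF g A C" and go: "\<forall>x\<in>scarrier A. \<forall>y\<in>scarrier A. lc (g x) (g y) = la x y"
    using fg by (simp_all add: W embedding_with_order_iff)
  obtain E lE b c where E: "E \<in> K" "coherent_order aF \<tau> E lE"
    and b: "embedding aF b B E" "\<forall>x\<in>scarrier B. \<forall>y\<in>scarrier B. lE (b x) (b y) = lb x y"
    and c: "embedding aF c C E" "\<forall>x\<in>scarrier C. \<forall>y\<in>scarrier C. lE (c x) (c y) = lc x y"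
    and bc: "b ` f ` scarrier A = c ` g ` scarrier A"
    by (rule order_preserving_embeddings_common_image[OF ramsey K l(2,3) f g])
  have "(b \<circ> f) x = (c \<circ> g) x" if "x \<in> scarrier A" for x
  proof (rule order_embeddings_eq_if_image_eq[where l' = lE and u = "b \<circ> f" and v = "c \<circ> g",
        OF coherent_order_linear[OF l(1)] finite_member[OF K(1)]])
    show "inj_on (b \<circ> f) (scarrier A)" "inj_on (c \<circ> g) (scarrier A)"
      using embedding_comp[OF f b(1)] embedding_comp[OF g c(1)] by (simp_all add: embedding_inj_on)
    show "(b \<circ> f) ` scarrier A = (c \<circ> g) ` scarrier A" using bc by (simp add: image_comp)
    show "lE ((b \<circ> f) p) ((b \<circ> f) q) = la p q" "lE ((c \<circ> g) p) ((c \<circ> g) q) = la p q"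
      if "p \<in> scarrier A" "q \<in> scarrier A" for p q
      using that fo go b(2) c(2) embedding_image_subset[OF f] embedding_image_subset[OF g]
      by (simp_all add: image_subset_iff)
  qed (rule that)
  moreover have "with_order E lE \<in> Kstar" using E by (simp add: with_order_in_Kstar_iff)
  moreover have "embedding aF b B' (with_order E lE)" "embedding aF c C' (with_order E lE)"
    using b c by (simp_all add: W embedding_with_order_iff)
  ultimately show "\<exists>D\<in>Kstar. \<exists>f' g'. embedding aF f' B' D \<and> embedding aF g' C' D \<and>
      (\<forall>x\<in>scarrier A'. f' (f x) = g' (g x))"
    by (auto simp: W)
qed
end

context coherent_expansion
begin

lemma coherent_orders_automorphism:
  assumes "X \<in> K" "coherent_order aF \<tau> X l" "coherent_order aF \<tau> X l'"
  shows "\<exists>\<sigma>. isomorphism aF \<sigma> X X \<and> (\<forall>x\<in>scarrier X. \<forall>y\<in>scarrier X. l' (\<sigma> x) (\<sigma> y) = l x y)"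
  using coherent_orders_isomorphic[OF wf_struc_member[OF assms(1)] assms(2,3)]
  by (auto simp: isomorphic_def isomorphism_with_order_iff)

text \<open>The coherent order on D pulls back along p0 \<circ> a to a coherent order on A, which is the
  given one twisted by an automorphism \<sigma>; amalgamating beforehand over all (finitely many) such
  twists provides an embedding p of B into D that undoes \<sigma> on a(A).\<close>

lemma reasonable_Kstar: "reasonable aF Kstar"
  unfolding reasonable_def reduct_Kstar admissible_def
proof (intro ballI allI impI)
  fix A B a lA
  assume A: "A \<in> K" and B: "B \<in> K" and a_lA: "embedding aF a A B \<and> with_order A lA \<in> Kstar"
  then have a: "embedding aF a A B" and lA: "coherent_order aF \<tau> A lA"
    by (simp_all add: with_order_in_Kstar_iff)
  define Ords where "Ords = {R \<in> Pow (scarrier A \<times> scarrier A). coherent_order aF \<tau> A (\<lambda>x y. (x, y) \<in> R)}"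
  define twist where "twist R = (SOME \<sigma>. isomorphism aF \<sigma> A A \<and>
      (\<forall>x\<in>scarrier A. \<forall>y\<in>scarrier A. (\<sigma> x, \<sigma> y) \<in> R \<longleftrightarrow> lA x y))" for R
  have twist: "isomorphism aF (twist R) A A"
      "\<forall>x\<in>scarrier A. \<forall>y\<in>scarrier A. (twist R x, twist R y) \<in> R \<longleftrightarrow> lA x y"
    if "R \<in> Ords" for R
    using someI_ex[OF coherent_orders_automorphism[OF A lA, of "\<lambda>x y. (x, y) \<in> R"]] that
    unfolding twist_def Ords_def by blast+
  have "finite (twist ` Ords)" using finite_member[OF A] by (simp add: Ords_def)
  moreover have "embedding aF \<sigma> A A" if "\<sigma> \<in> twist ` Ords" for \<sigma>
    using that twist(1) isomorphism_imp_embedding by blast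
  ultimately obtain D p0 where D: "D \<in> K" and p0: "embedding aF p0 B D"
    and undo: "\<forall>\<sigma>\<in>twist ` Ords. \<exists>p. embedding aF p B D \<and> (\<forall>x\<in>scarrier A. p (a x) = p0 (a (\<sigma> x)))"
    using amalgamation_self_embeddings[OF A B a, of "twist ` Ords"] by blast
  obtain lD where lD: "coherent_order aF \<tau> D lD" using coherent_order_exists[OF D] by blast
  define R0 where "R0 = {(x, y). x \<in> scarrier A \<and> y \<in> scarrier A \<and> lD (p0 (a x)) (p0 (a y))}"
  have "coherent_order aF \<tau> A (\<lambda>x y. lD (p0 (a x)) (p0 (a y)))"
    using coherent_order_pullback[OF A D embedding_comp[OF a p0] lD] by simp
  then have R0: "R0 \<in> Ords"
    unfolding Ords_def R0_def by (auto cong: coherent_order_cong)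
  then obtain p where p: "embedding aF p B D" and pa: "\<forall>x\<in>scarrier A. p (a x) = p0 (a (twist R0 x))"
    using undo by blast
  have "lD (p (a x)) (p (a y)) = lA x y" if "x \<in> scarrier A" "y \<in> scarrier A" for x y
  proof -
    have "twist R0 x \<in> scarrier A" "twist R0 y \<in> scarrier A"
      using twist(1)[OF R0] that by (auto simp: isomorphism_def)
    then have "lD (p (a x)) (p (a y)) \<longleftrightarrow> (twist R0 x, twist R0 y) \<in> R0"
      using that pa by (simp add: R0_def)
    also have "\<dots> \<longleftrightarrow> lA x y" using twist(2)[OF R0] that by blast
    finally show ?thesis .
  qed
  then have "embedding aF a (with_order A lA) (with_order B (\<lambda>x y. lD (p x) (p y)))"
    using a by (simp add: embedding_with_order_iff)
  moreover have "with_order B (\<lambda>x y. lD (p x) (p y)) \<in> Kstar"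
    using coherent_order_pullback[OF B D p lD] B by (simp add: with_order_in_Kstar_iff)
  ultimately show "\<exists>lB. with_order B lB \<in> Kstar \<and> embedding aF a (with_order A lA) (with_order B lB)"
    by blast
qed

end

theorem mainTheorem15:
  fixes aR :: "'r \<Rightarrow> nat" and aF :: "'f \<Rightarrow> nat" and K :: "('r, 'f) struc set"
  assumes "fraisse_class aR aF K" and "ramsey_class aF K"
  shows "\<exists>Ks :: ('r option, 'f) struc set.
           fraisse_class (ord_arity aR) aF Ks \<and> ordered_class Ks \<and> reduct ` Ks = K \<and>
           reasonable aF Ks \<and> forgetful aF Ks"
proof -
  interpret ramsey_fraisse aR aF K
    using assms by (unfold_locales)
  obtain \<tau> where "coherent_choice aF K \<tau>" using coherent_choice_exists by blast
  then interpret coherent_expansion aR aF K \<tau>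
    by unfold_locales
  have "fraisse_class (ord_arity aR) aF Kstar"
    unfolding fraisse_class_def
    using class_of_finite_Kstar hereditary_Kstar joint_embedding_Kstar
      amalgamation_Kstar[OF assms(2)] arbitrarily_large_Kstar by blast
  then show ?thesis
    using ordered_class_Kstar reduct_Kstar reasonable_Kstar forgetful_Kstar by blast
qed

end
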